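(* Let $\mathcal Y\subseteq\mathcal C$ be a contravariantly finite subcategory which is closed under extensions and direct summands, and let $\mathcal X=\mathcal Y^{\perp_1}$. Then $\mathcal X$ is a covariantly finite subcategory of $\mathcal C$ which is closed under extensions and direct summands.
   Context: $(\mathcal C,\mathbb E,\mathfrak s)$ is an extriangulated category in the sense of Nakaoka–Palu, whose underlying additive category is Krull–Schmidt, and which has enough projectives and enough injectives (projective $P$: $\mathbb E(P,-)=0$; injective $I$: $\mathbb E(-,I)=0$; every object is the third term of an $\mathbb E$-triangle with projective middle term and the first term of one with injective middle term). All subcategories are full additive subcategories closed under isomorphisms. A subcategory is closed under extensions if for every $\mathbb E$-triangle $A\to B\to C\dashrightarrow$ with $A,C$ in it, $B$ is in it. For a subcategory $\mathcal X$, ${}^{\perp_1}\mathcal X=\{Y\in\mathcal C:\mathbb E(Y,X)=0\ \forall X\in\mathcal X\}$ and $\mathcal X^{\perp_1}=\{Y\in\mathcal C:\mathbb E(X,Y)=0\ \forall X\in\mathcal X\}$. Covariantly/contravariantly finite means every object has a left/right approximation by the subcategory. *)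

theory Defs
  imports Main
begin

section \<open>Extriangulated categories (Nakaoka--Palu), encoded concretely\<close>

text \<open>
Data of an extriangulated category:
  objects obj, arrows arr with domain dm and codomain cd, composition comp g f (= g after f),
  identities iden, abelian group structure on Hom-sets (madd, mneg, mzero X Y),
  the bifunctor E: elements ext, an element d lies in E(eC d, eA d) (i.e. E(C,A) with C=eC d,
  A=eA d), group structure (eadd, eneg, ezero C A),
  pullb c d = c^* d  (for c: C' -> C, d in E(C,A), gives element of E(C',A)),
  pushf a d = a_* d  (for a: A -> A', d in E(C,A), gives element of E(C,A')),
  and the realization s: realizes d x y  means  s(d) = [A -x-> B -y-> C].
\<close>

record ('o, 'm, 'e) extri_data =
  obj :: "'o set"
  arr :: "'m set"
  dm :: "'m \<Rightarrow> 'o"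
  cd :: "'m \<Rightarrow> 'o"
  comp :: "'m \<Rightarrow> 'm \<Rightarrow> 'm"
  iden :: "'o \<Rightarrow> 'm"
  madd :: "'m \<Rightarrow> 'm \<Rightarrow> 'm"
  mneg :: "'m \<Rightarrow> 'm"
  mzero :: "'o \<Rightarrow> 'o \<Rightarrow> 'm"
  ext :: "'e set"
  eC :: "'e \<Rightarrow> 'o"
  eA :: "'e \<Rightarrow> 'o"
  eadd :: "'e \<Rightarrow> 'e \<Rightarrow> 'e"
  eneg :: "'e \<Rightarrow> 'e"
  ezero :: "'o \<Rightarrow> 'o \<Rightarrow> 'e"
  pullb :: "'m \<Rightarrow> 'e \<Rightarrow> 'e"
  pushf :: "'m \<Rightarrow> 'e \<Rightarrow> 'e"
  realizes :: "'e \<Rightarrow> 'm \<Rightarrow> 'm \<Rightarrow> bool"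

definition Hom :: "('o,'m,'e,'z) extri_data_scheme \<Rightarrow> 'o \<Rightarrow> 'o \<Rightarrow> 'm set" where
  "Hom C X Y = {f \<in> arr C. dm C f = X \<and> cd C f = Y}"

definition Ext :: "('o,'m,'e,'z) extri_data_scheme \<Rightarrow> 'o \<Rightarrow> 'o \<Rightarrow> 'e set" where
  "Ext C Z X = {d \<in> ext C. eC C d = Z \<and> eA C d = X}"

definition is_iso :: "('o,'m,'e,'z) extri_data_scheme \<Rightarrow> 'm \<Rightarrow> 'o \<Rightarrow> 'o \<Rightarrow> bool" where
  "is_iso C f X Y \<longleftrightarrow> f \<in> Hom C X Y \<and>
     (\<exists>g \<in> Hom C Y X. comp C g f = iden C X \<and> comp C f g = iden C Y)"

definition is_category :: "('o,'m,'e,'z) extri_data_scheme \<Rightarrow> bool" where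
  "is_category C \<longleftrightarrow>
     (\<forall>f \<in> arr C. dm C f \<in> obj C \<and> cd C f \<in> obj C) \<and>
     (\<forall>X \<in> obj C. iden C X \<in> Hom C X X) \<and>
     (\<forall>X Y Z f g. f \<in> Hom C X Y \<longrightarrow> g \<in> Hom C Y Z \<longrightarrow> comp C g f \<in> Hom C X Z) \<and>
     (\<forall>W X Y Z f g h. f \<in> Hom C W X \<longrightarrow> g \<in> Hom C X Y \<longrightarrow> h \<in> Hom C Y Z \<longrightarrow>
        comp C h (comp C g f) = comp C (comp C h g) f) \<and>
     (\<forall>X Y f. f \<in> Hom C X Y \<longrightarrow> comp C f (iden C X) = f \<and> comp C (iden C Y) f = f)"

definition is_preadditive :: "('o,'m,'e,'z) extri_data_scheme \<Rightarrow> bool" where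
  "is_preadditive C \<longleftrightarrow> is_category C \<and>
     (\<forall>X \<in> obj C. \<forall>Y \<in> obj C.
        mzero C X Y \<in> Hom C X Y \<and>
        (\<forall>f \<in> Hom C X Y. \<forall>g \<in> Hom C X Y. madd C f g \<in> Hom C X Y) \<and>
        (\<forall>f \<in> Hom C X Y. mneg C f \<in> Hom C X Y) \<and>
        (\<forall>f \<in> Hom C X Y. \<forall>g \<in> Hom C X Y. \<forall>h \<in> Hom C X Y.
            madd C (madd C f g) h = madd C f (madd C g h)) \<and>
        (\<forall>f \<in> Hom C X Y. \<forall>g \<in> Hom C X Y. madd C f g = madd C g f) \<and>
        (\<forall>f \<in> Hom C X Y. madd C (mzero C X Y) f = f) \<and>
        (\<forall>f \<in> Hom C X Y. madd C (mneg C f) f = mzero C X Y)) \<and>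
     (\<forall>X Y Z f f' g. f \<in> Hom C X Y \<longrightarrow> f' \<in> Hom C X Y \<longrightarrow> g \<in> Hom C Y Z \<longrightarrow>
        comp C g (madd C f f') = madd C (comp C g f) (comp C g f')) \<and>
     (\<forall>X Y Z f g g'. f \<in> Hom C X Y \<longrightarrow> g \<in> Hom C Y Z \<longrightarrow> g' \<in> Hom C Y Z \<longrightarrow>
        comp C (madd C g g') f = madd C (comp C g f) (comp C g' f))"

definition zero_obj :: "('o,'m,'e,'z) extri_data_scheme \<Rightarrow> 'o \<Rightarrow> bool" where
  "zero_obj C Z \<longleftrightarrow> Z \<in> obj C \<and>
     (\<forall>X \<in> obj C. Hom C Z X = {mzero C Z X} \<and> Hom C X Z = {mzero C X Z})"

definition biprod :: "('o,'m,'e,'z) extri_data_scheme \<Rightarrow> 'o \<Rightarrow> 'o \<Rightarrow> 'o \<Rightarrow>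
    'm \<Rightarrow> 'm \<Rightarrow> 'm \<Rightarrow> 'm \<Rightarrow> bool" where
  "biprod C X1 X2 P i1 i2 p1 p2 \<longleftrightarrow>
     X1 \<in> obj C \<and> X2 \<in> obj C \<and> P \<in> obj C \<and>
     i1 \<in> Hom C X1 P \<and> i2 \<in> Hom C X2 P \<and> p1 \<in> Hom C P X1 \<and> p2 \<in> Hom C P X2 \<and>
     comp C p1 i1 = iden C X1 \<and> comp C p2 i2 = iden C X2 \<and>
     comp C p2 i1 = mzero C X1 X2 \<and> comp C p1 i2 = mzero C X2 X1 \<and>
     madd C (comp C i1 p1) (comp C i2 p2) = iden C P"

definition is_additive :: "('o,'m,'e,'z) extri_data_scheme \<Rightarrow> bool" where
  "is_additive C \<longleftrightarrow> is_preadditive C \<and> (\<exists>Z. zero_obj C Z) \<and>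
     (\<forall>X1 \<in> obj C. \<forall>X2 \<in> obj C. \<exists>P i1 i2 p1 p2. biprod C X1 X2 P i1 i2 p1 p2)"

primrec hsum :: "('o,'m,'e,'z) extri_data_scheme \<Rightarrow> 'o \<Rightarrow> 'o \<Rightarrow> (nat \<Rightarrow> 'm) \<Rightarrow> nat \<Rightarrow> 'm" where
  "hsum C X Y f 0 = mzero C X Y"
| "hsum C X Y f (Suc n) = madd C (hsum C X Y f n) (f n)"

definition is_unit_end :: "('o,'m,'e,'z) extri_data_scheme \<Rightarrow> 'o \<Rightarrow> 'm \<Rightarrow> bool" where
  "is_unit_end C X f \<longleftrightarrow> (\<exists>g \<in> Hom C X X. comp C g f = iden C X \<and> comp C f g = iden C X)"

definition local_end :: "('o,'m,'e,'z) extri_data_scheme \<Rightarrow> 'o \<Rightarrow> bool" where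
  "local_end C X \<longleftrightarrow> X \<in> obj C \<and> iden C X \<noteq> mzero C X X \<and>
     (\<forall>f \<in> Hom C X X. is_unit_end C X f \<or> is_unit_end C X (madd C (iden C X) (mneg C f)))"

definition krull_schmidt :: "('o,'m,'e,'z) extri_data_scheme \<Rightarrow> bool" where
  "krull_schmidt C \<longleftrightarrow> is_additive C \<and>
     (\<forall>X \<in> obj C. \<exists>(n::nat) Xs inj prj.
        (\<forall>k < n. local_end C (Xs k) \<and> inj k \<in> Hom C (Xs k) X \<and> prj k \<in> Hom C X (Xs k)) \<and>
        (\<forall>j < n. \<forall>k < n. comp C (prj j) (inj k) =
              (if j = k then iden C (Xs k) else mzero C (Xs k) (Xs j))) \<and>
        hsum C X X (\<lambda>k. comp C (inj k) (prj k)) n = iden C X)"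

definition ET1 :: "('o,'m,'e,'z) extri_data_scheme \<Rightarrow> bool" where
  "ET1 C \<longleftrightarrow>
     (\<forall>d \<in> ext C. eC C d \<in> obj C \<and> eA C d \<in> obj C) \<and>
     (\<forall>Z \<in> obj C. \<forall>X \<in> obj C.
        ezero C Z X \<in> Ext C Z X \<and>
        (\<forall>d \<in> Ext C Z X. \<forall>d' \<in> Ext C Z X. eadd C d d' \<in> Ext C Z X) \<and>
        (\<forall>d \<in> Ext C Z X. eneg C d \<in> Ext C Z X) \<and>
        (\<forall>d \<in> Ext C Z X. \<forall>d' \<in> Ext C Z X. \<forall>d'' \<in> Ext C Z X.
            eadd C (eadd C d d') d'' = eadd C d (eadd C d' d'')) \<and>
        (\<forall>d \<in> Ext C Z X. \<forall>d' \<in> Ext C Z X. eadd C d d' = eadd C d' d) \<and>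
        (\<forall>d \<in> Ext C Z X. eadd C (ezero C Z X) d = d) \<and>
        (\<forall>d \<in> Ext C Z X. eadd C (eneg C d) d = ezero C Z X)) \<and>
     (\<forall>Z Z' X c d. c \<in> Hom C Z' Z \<longrightarrow> d \<in> Ext C Z X \<longrightarrow> pullb C c d \<in> Ext C Z' X) \<and>
     (\<forall>Z X X' a d. a \<in> Hom C X X' \<longrightarrow> d \<in> Ext C Z X \<longrightarrow> pushf C a d \<in> Ext C Z X') \<and>
     (\<forall>Z Z' X c d d'. c \<in> Hom C Z' Z \<longrightarrow> d \<in> Ext C Z X \<longrightarrow> d' \<in> Ext C Z X \<longrightarrow>
        pullb C c (eadd C d d') = eadd C (pullb C c d) (pullb C c d')) \<and>
     (\<forall>Z X X' a d d'. a \<in> Hom C X X' \<longrightarrow> d \<in> Ext C Z X \<longrightarrow> d' \<in> Ext C Z X \<longrightarrow>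
        pushf C a (eadd C d d') = eadd C (pushf C a d) (pushf C a d')) \<and>
     (\<forall>Z X d. d \<in> Ext C Z X \<longrightarrow> pullb C (iden C Z) d = d \<and> pushf C (iden C X) d = d) \<and>
     (\<forall>Z Z' Z'' X c c' d. c \<in> Hom C Z' Z \<longrightarrow> c' \<in> Hom C Z'' Z' \<longrightarrow> d \<in> Ext C Z X \<longrightarrow>
        pullb C (comp C c c') d = pullb C c' (pullb C c d)) \<and>
     (\<forall>Z X X' X'' a a' d. a \<in> Hom C X X' \<longrightarrow> a' \<in> Hom C X' X'' \<longrightarrow> d \<in> Ext C Z X \<longrightarrow>
        pushf C (comp C a' a) d = pushf C a' (pushf C a d)) \<and>
     (\<forall>Z Z' X X' a c d. a \<in> Hom C X X' \<longrightarrow> c \<in> Hom C Z' Z \<longrightarrow> d \<in> Ext C Z X \<longrightarrow>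
        pushf C a (pullb C c d) = pullb C c (pushf C a d)) \<and>
     (\<forall>Z Z' X c c' d. c \<in> Hom C Z' Z \<longrightarrow> c' \<in> Hom C Z' Z \<longrightarrow> d \<in> Ext C Z X \<longrightarrow>
        pullb C (madd C c c') d = eadd C (pullb C c d) (pullb C c' d)) \<and>
     (\<forall>Z X X' a a' d. a \<in> Hom C X X' \<longrightarrow> a' \<in> Hom C X X' \<longrightarrow> d \<in> Ext C Z X \<longrightarrow>
        pushf C (madd C a a') d = eadd C (pushf C a d) (pushf C a' d))"

definition seq_equiv :: "('o,'m,'e,'z) extri_data_scheme \<Rightarrow> 'm \<Rightarrow> 'm \<Rightarrow> 'm \<Rightarrow> 'm \<Rightarrow> bool" where
  "seq_equiv C x y x' y' \<longleftrightarrow>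
     (\<exists>b. is_iso C b (cd C x) (cd C x') \<and> comp C b x = x' \<and> comp C y' b = y)"

definition etri :: "('o,'m,'e,'z) extri_data_scheme \<Rightarrow> 'm \<Rightarrow> 'm \<Rightarrow> 'e \<Rightarrow> 'o \<Rightarrow> 'o \<Rightarrow> 'o \<Rightarrow> bool" where
  "etri C x y d A B Z \<longleftrightarrow> d \<in> Ext C Z A \<and> x \<in> Hom C A B \<and> y \<in> Hom C B Z \<and> realizes C d x y"

definition is_realization :: "('o,'m,'e,'z) extri_data_scheme \<Rightarrow> bool" where
  "is_realization C \<longleftrightarrow>
     (\<forall>d x y. realizes C d x y \<longrightarrow> d \<in> ext C) \<and>
     (\<forall>Z \<in> obj C. \<forall>A \<in> obj C. \<forall>d \<in> Ext C Z A.
        (\<exists>x y. realizes C d x y) \<and>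
        (\<forall>x y. realizes C d x y \<longrightarrow> (\<exists>B. x \<in> Hom C A B \<and> y \<in> Hom C B Z)) \<and>
        (\<forall>x y x' y'. realizes C d x y \<longrightarrow> realizes C d x' y' \<longrightarrow> seq_equiv C x y x' y') \<and>
        (\<forall>x y x' y' B'. realizes C d x y \<longrightarrow> x' \<in> Hom C A B' \<longrightarrow> y' \<in> Hom C B' Z \<longrightarrow>
            seq_equiv C x y x' y' \<longrightarrow> realizes C d x' y')) \<and>
     \<comment> \<open>(R1)\<close>
     (\<forall>x y d A B Z x' y' d' A' B' Z' a c.
        etri C x y d A B Z \<longrightarrow> etri C x' y' d' A' B' Z' \<longrightarrow>
        a \<in> Hom C A A' \<longrightarrow> c \<in> Hom C Z Z' \<longrightarrow> pushf C a d = pullb C c d' \<longrightarrow>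
        (\<exists>b \<in> Hom C B B'. comp C b x = comp C x' a \<and> comp C y' b = comp C c y))"

definition ET2 :: "('o,'m,'e,'z) extri_data_scheme \<Rightarrow> bool" where
  "ET2 C \<longleftrightarrow> is_realization C \<and>
     (\<forall>Z \<in> obj C. \<forall>A \<in> obj C. \<exists>P i1 i2 p1 p2.
        biprod C A Z P i1 i2 p1 p2 \<and> realizes C (ezero C Z A) i1 p2) \<and>
     (\<forall>x y d A B Z x' y' d' A' B' Z' PA ia ia' pa pa' PB ib ib' pb pb' PZ iz iz' pz pz'.
        etri C x y d A B Z \<longrightarrow> etri C x' y' d' A' B' Z' \<longrightarrow>
        biprod C A A' PA ia ia' pa pa' \<longrightarrow> biprod C B B' PB ib ib' pb pb' \<longrightarrow>
        biprod C Z Z' PZ iz iz' pz pz' \<longrightarrow>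
        realizes C (eadd C (pushf C ia (pullb C pz d)) (pushf C ia' (pullb C pz' d')))
          (madd C (comp C ib (comp C x pa)) (comp C ib' (comp C x' pa')))
          (madd C (comp C iz (comp C y pb)) (comp C iz' (comp C y' pb'))))"

definition ET3 :: "('o,'m,'e,'z) extri_data_scheme \<Rightarrow> bool" where
  "ET3 C \<longleftrightarrow>
     (\<forall>x y d A B Z x' y' d' A' B' Z' a b.
        etri C x y d A B Z \<longrightarrow> etri C x' y' d' A' B' Z' \<longrightarrow>
        a \<in> Hom C A A' \<longrightarrow> b \<in> Hom C B B' \<longrightarrow> comp C b x = comp C x' a \<longrightarrow>
        (\<exists>c \<in> Hom C Z Z'. comp C c y = comp C y' b \<and> pushf C a d = pullb C c d'))"

definition ET3op :: "('o,'m,'e,'z) extri_data_scheme \<Rightarrow> bool" where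
  "ET3op C \<longleftrightarrow>
     (\<forall>x y d A B Z x' y' d' A' B' Z' b c.
        etri C x y d A B Z \<longrightarrow> etri C x' y' d' A' B' Z' \<longrightarrow>
        b \<in> Hom C B B' \<longrightarrow> c \<in> Hom C Z Z' \<longrightarrow> comp C y' b = comp C c y \<longrightarrow>
        (\<exists>a \<in> Hom C A A'. comp C x' a = comp C b x \<and> pushf C a d = pullb C c d'))"

definition ET4 :: "('o,'m,'e,'z) extri_data_scheme \<Rightarrow> bool" where
  "ET4 C \<longleftrightarrow>
     (\<forall>f f' d A B D g g' d' Cc F.
        etri C f f' d A B D \<longrightarrow> etri C g g' d' B Cc F \<longrightarrow>
        (\<exists>E h h' d'' dd e.
           etri C h h' d'' A Cc E \<and> dd \<in> Hom C D E \<and> e \<in> Hom C E F \<and>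
           h = comp C g f \<and> comp C h' g = comp C dd f' \<and> comp C e h' = g' \<and>
           etri C dd e (pushf C f' d') D E F \<and>
           pullb C dd d'' = d \<and> pushf C f d'' = pullb C e d'))"

definition ET4op :: "('o,'m,'e,'z) extri_data_scheme \<Rightarrow> bool" where
  "ET4op C \<longleftrightarrow>
     (\<forall>f' f d D A B g' g d' F Cc.
        etri C f' f d D A B \<longrightarrow> etri C g' g d' F B Cc \<longrightarrow>
        (\<exists>E dd e h' h d''.
           etri C h' h d'' E A Cc \<and> dd \<in> Hom C D E \<and> e \<in> Hom C E F \<and>
           comp C h' dd = f' \<and> comp C f h' = comp C g' e \<and> h = comp C g f \<and>
           etri C dd e (pullb C g' d) D E F \<and>
           pushf C e d'' = d' \<and> pushf C dd d = pullb C g d''))"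

definition extriangulated :: "('o,'m,'e,'z) extri_data_scheme \<Rightarrow> bool" where
  "extriangulated C \<longleftrightarrow> is_additive C \<and> ET1 C \<and> ET2 C \<and> ET3 C \<and> ET3op C \<and> ET4 C \<and> ET4op C"

section \<open>Projectives, injectives, subcategories\<close>

definition projective :: "('o,'m,'e,'z) extri_data_scheme \<Rightarrow> 'o \<Rightarrow> bool" where
  "projective C P \<longleftrightarrow> P \<in> obj C \<and> (\<forall>X \<in> obj C. Ext C P X = {ezero C P X})"

definition injective :: "('o,'m,'e,'z) extri_data_scheme \<Rightarrow> 'o \<Rightarrow> bool" where
  "injective C I \<longleftrightarrow> I \<in> obj C \<and> (\<forall>X \<in> obj C. Ext C X I = {ezero C X I})"

definition enough_projectives :: "('o,'m,'e,'z) extri_data_scheme \<Rightarrow> bool" where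
  "enough_projectives C \<longleftrightarrow>
     (\<forall>Z \<in> obj C. \<exists>x y d A P. etri C x y d A P Z \<and> projective C P)"

definition enough_injectives :: "('o,'m,'e,'z) extri_data_scheme \<Rightarrow> bool" where
  "enough_injectives C \<longleftrightarrow>
     (\<forall>A \<in> obj C. \<exists>x y d I Z. etri C x y d A I Z \<and> injective C I)"

text \<open>Full additive subcategory closed under isomorphisms (given by its class of objects).\<close>
definition subcat :: "('o,'m,'e,'z) extri_data_scheme \<Rightarrow> 'o set \<Rightarrow> bool" where
  "subcat C \<X> \<longleftrightarrow> \<X> \<subseteq> obj C \<and> (\<exists>Z \<in> \<X>. zero_obj C Z) \<and>
     (\<forall>X Y f. X \<in> \<X> \<longrightarrow> is_iso C f X Y \<longrightarrow> Y \<in> \<X>) \<and>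
     (\<forall>X1 X2 P i1 i2 p1 p2. X1 \<in> \<X> \<longrightarrow> X2 \<in> \<X> \<longrightarrow> biprod C X1 X2 P i1 i2 p1 p2 \<longrightarrow> P \<in> \<X>)"

definition closed_ext :: "('o,'m,'e,'z) extri_data_scheme \<Rightarrow> 'o set \<Rightarrow> bool" where
  "closed_ext C \<X> \<longleftrightarrow>
     (\<forall>x y d A B Z. etri C x y d A B Z \<longrightarrow> A \<in> \<X> \<longrightarrow> Z \<in> \<X> \<longrightarrow> B \<in> \<X>)"

definition closed_summands :: "('o,'m,'e,'z) extri_data_scheme \<Rightarrow> 'o set \<Rightarrow> bool" where
  "closed_summands C \<X> \<longleftrightarrow>
     (\<forall>X1 X2 P i1 i2 p1 p2. biprod C X1 X2 P i1 i2 p1 p2 \<longrightarrow> P \<in> \<X> \<longrightarrow> X1 \<in> \<X> \<and> X2 \<in> \<X>)"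

definition contravariantly_finite :: "('o,'m,'e,'z) extri_data_scheme \<Rightarrow> 'o set \<Rightarrow> bool" where
  "contravariantly_finite C \<X> \<longleftrightarrow>
     (\<forall>M \<in> obj C. \<exists>X \<in> \<X>. \<exists>f \<in> Hom C X M.
        \<forall>X' \<in> \<X>. \<forall>g \<in> Hom C X' M. \<exists>h \<in> Hom C X' X. comp C f h = g)"

definition covariantly_finite :: "('o,'m,'e,'z) extri_data_scheme \<Rightarrow> 'o set \<Rightarrow> bool" where
  "covariantly_finite C \<X> \<longleftrightarrow>
     (\<forall>M \<in> obj C. \<exists>X \<in> \<X>. \<exists>f \<in> Hom C M X.
        \<forall>X' \<in> \<X>. \<forall>g \<in> Hom C M X'. \<exists>h \<in> Hom C X X'. comp C h f = g)"

definition rperp1 :: "('o,'m,'e,'z) extri_data_scheme \<Rightarrow> 'o set \<Rightarrow> 'o set" where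
  "rperp1 C \<X> = {Y \<in> obj C. \<forall>X \<in> \<X>. Ext C X Y = {ezero C X Y}}"

end

theory Submission
  imports Defs
begin

text \<open>
  Closure of \<X> = rperp1 C \<Y> under isomorphisms, finite sums, summands and extensions follows from the
  functoriality of E and the exactness of E(V, -) at the middle term of an E-triangle.

  For covariant finiteness, fix M and an E-triangle M \<rightarrow> I \<rightarrow> Z with I injective. Among the right
  \<Y>-approximations of Z choose g : Y0 \<rightarrow> Z with the fewest indecomposable summands. Then every
  \<phi> with g \<phi> = g is a split monomorphism: otherwise some matrix entry of 1 - \<phi> is an isomorphism
  and that summand of Y0 could be discarded; if no entry is, a Nakayama-type induction gives \<phi> a left inverse.
  Pulling the triangle back along g gives M \<rightarrow> E \<rightarrow> Y0. By Wakamatsu's argument E lies in \<X>, and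
  M \<rightarrow> E is a left \<X>-approximation because E(Y0, X) = 0 for X in \<X>.
\<close>

section \<open>Preadditive categories\<close>

lemma Hom_iff: "f \<in> Hom C X Y \<longleftrightarrow> f \<in> arr C \<and> dm C f = X \<and> cd C f = Y"
  by (simp add: Hom_def)

text \<open>skip_index j enumerates the naturals other than j in increasing order.\<close>
definition skip_index :: "nat \<Rightarrow> nat \<Rightarrow> nat" where "skip_index j l = (if l < j then l else Suc l)"

locale preadditive_cat =
  fixes C :: "('o,'m,'e,'z) extri_data_scheme"
  assumes preadditive: "is_preadditive C"
begin

abbreviation "Ar \<equiv> arr C"
abbreviation "Ob \<equiv> obj C"

lemma category: "is_category C" using preadditive by (simp add: is_preadditive_def)

lemma dm_cd_obj: "f \<in> Ar \<Longrightarrow> dm C f \<in> Ob \<and> cd C f \<in> Ob"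
  using category by (simp add: is_category_def)
lemma dm_obj[simp]: "f \<in> Ar \<Longrightarrow> dm C f \<in> Ob" using dm_cd_obj by blast
lemma cd_obj[simp]: "f \<in> Ar \<Longrightarrow> cd C f \<in> Ob" using dm_cd_obj by blast

lemma iden_Hom: "X \<in> Ob \<Longrightarrow> iden C X \<in> Hom C X X" using category by (simp add: is_category_def)
lemma iden_arr[simp]: "X \<in> Ob \<Longrightarrow> iden C X \<in> Ar" using iden_Hom by (simp add: Hom_iff)
lemma dm_iden[simp]: "X \<in> Ob \<Longrightarrow> dm C (iden C X) = X" using iden_Hom by (simp add: Hom_iff)
lemma cd_iden[simp]: "X \<in> Ob \<Longrightarrow> cd C (iden C X) = X" using iden_Hom by (simp add: Hom_iff)

lemma comp_Hom: "f \<in> Hom C X Y \<Longrightarrow> g \<in> Hom C Y Z \<Longrightarrow> comp C g f \<in> Hom C X Z"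
  using category by (simp add: is_category_def)
lemma comp_arr[simp]: "f \<in> Ar \<Longrightarrow> g \<in> Ar \<Longrightarrow> dm C g = cd C f \<Longrightarrow> comp C g f \<in> Ar"
  using comp_Hom[of f "dm C f" "cd C f" g "cd C g"] by (simp add: Hom_iff)
lemma dm_comp[simp]: "f \<in> Ar \<Longrightarrow> g \<in> Ar \<Longrightarrow> dm C g = cd C f \<Longrightarrow> dm C (comp C g f) = dm C f"
  using comp_Hom[of f "dm C f" "cd C f" g "cd C g"] by (simp add: Hom_iff)
lemma cd_comp[simp]: "f \<in> Ar \<Longrightarrow> g \<in> Ar \<Longrightarrow> dm C g = cd C f \<Longrightarrow> cd C (comp C g f) = cd C g"
  using comp_Hom[of f "dm C f" "cd C f" g "cd C g"] by (simp add: Hom_iff)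

lemma comp_assoc[simp]: "f \<in> Ar \<Longrightarrow> g \<in> Ar \<Longrightarrow> h \<in> Ar \<Longrightarrow> dm C g = cd C f \<Longrightarrow> dm C h = cd C g \<Longrightarrow>
   comp C (comp C h g) f = comp C h (comp C g f)"
proof -
  assume a: "f \<in> Ar" "g \<in> Ar" "h \<in> Ar" "dm C g = cd C f" "dm C h = cd C g"
  have "\<forall>W X Y Z f g h. f \<in> Hom C W X \<longrightarrow> g \<in> Hom C X Y \<longrightarrow> h \<in> Hom C Y Z \<longrightarrow>
        comp C h (comp C g f) = comp C (comp C h g) f" using category by (simp add: is_category_def)
  hence "comp C h (comp C g f) = comp C (comp C h g) f"
    using a by (auto simp: Hom_iff)
  thus ?thesis by simp
qed

lemma iden_laws: "\<forall>X Y f. f \<in> Hom C X Y \<longrightarrow> comp C f (iden C X) = f \<and> comp C (iden C Y) f = f"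
  using category by (simp add: is_category_def)
lemma comp_iden_r[simp]: "f \<in> Ar \<Longrightarrow> X = dm C f \<Longrightarrow> comp C f (iden C X) = f"
  using iden_laws by (auto simp: Hom_iff)
lemma comp_iden_l[simp]: "f \<in> Ar \<Longrightarrow> Y = cd C f \<Longrightarrow> comp C (iden C Y) f = f"
  using iden_laws by (auto simp: Hom_iff)

lemma Hom_group: "X \<in> Ob \<Longrightarrow> Y \<in> Ob \<Longrightarrow>
        mzero C X Y \<in> Hom C X Y \<and>
        (\<forall>f \<in> Hom C X Y. \<forall>g \<in> Hom C X Y. madd C f g \<in> Hom C X Y) \<and>
        (\<forall>f \<in> Hom C X Y. mneg C f \<in> Hom C X Y) \<and>
        (\<forall>f \<in> Hom C X Y. \<forall>g \<in> Hom C X Y. \<forall>h \<in> Hom C X Y.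
            madd C (madd C f g) h = madd C f (madd C g h)) \<and>
        (\<forall>f \<in> Hom C X Y. \<forall>g \<in> Hom C X Y. madd C f g = madd C g f) \<and>
        (\<forall>f \<in> Hom C X Y. madd C (mzero C X Y) f = f) \<and>
        (\<forall>f \<in> Hom C X Y. madd C (mneg C f) f = mzero C X Y)"
  by (rule preadditive[unfolded is_preadditive_def, THEN conjunct2, THEN conjunct1, rule_format])

lemma mzero_Hom: "X \<in> Ob \<Longrightarrow> Y \<in> Ob \<Longrightarrow> mzero C X Y \<in> Hom C X Y" using Hom_group by blast
lemma madd_Hom: "X \<in> Ob \<Longrightarrow> Y \<in> Ob \<Longrightarrow> f \<in> Hom C X Y \<Longrightarrow> g \<in> Hom C X Y \<Longrightarrow> madd C f g \<in> Hom C X Y" using Hom_group by blast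
lemma mneg_Hom: "X \<in> Ob \<Longrightarrow> Y \<in> Ob \<Longrightarrow> f \<in> Hom C X Y \<Longrightarrow> mneg C f \<in> Hom C X Y" using Hom_group by blast
lemma madd_assoc_Hom: "X \<in> Ob \<Longrightarrow> Y \<in> Ob \<Longrightarrow> f \<in> Hom C X Y \<Longrightarrow> g \<in> Hom C X Y \<Longrightarrow> h \<in> Hom C X Y \<Longrightarrow> madd C (madd C f g) h = madd C f (madd C g h)" using Hom_group by blast
lemma madd_comm_Hom: "X \<in> Ob \<Longrightarrow> Y \<in> Ob \<Longrightarrow> f \<in> Hom C X Y \<Longrightarrow> g \<in> Hom C X Y \<Longrightarrow> madd C f g = madd C g f" using Hom_group by blast
lemma mzero_madd_Hom: "X \<in> Ob \<Longrightarrow> Y \<in> Ob \<Longrightarrow> f \<in> Hom C X Y \<Longrightarrow> madd C (mzero C X Y) f = f" using Hom_group by blast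
lemma mneg_madd_Hom: "X \<in> Ob \<Longrightarrow> Y \<in> Ob \<Longrightarrow> f \<in> Hom C X Y \<Longrightarrow> madd C (mneg C f) f = mzero C X Y" using Hom_group by blast

lemma mzero_arr[simp]: "X \<in> Ob \<Longrightarrow> Y \<in> Ob \<Longrightarrow> mzero C X Y \<in> Ar" using mzero_Hom by (simp add: Hom_iff)
lemma dm_mzero[simp]: "X \<in> Ob \<Longrightarrow> Y \<in> Ob \<Longrightarrow> dm C (mzero C X Y) = X" using mzero_Hom by (simp add: Hom_iff)
lemma cd_mzero[simp]: "X \<in> Ob \<Longrightarrow> Y \<in> Ob \<Longrightarrow> cd C (mzero C X Y) = Y" using mzero_Hom by (simp add: Hom_iff)

lemma madd_Hom_arr: "f \<in> Ar \<Longrightarrow> g \<in> Ar \<Longrightarrow> dm C g = dm C f \<Longrightarrow> cd C g = cd C f \<Longrightarrow>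
   madd C f g \<in> Hom C (dm C f) (cd C f)"
  by (rule madd_Hom) (auto simp: Hom_iff)
lemma madd_arr[simp]: "f \<in> Ar \<Longrightarrow> g \<in> Ar \<Longrightarrow> dm C g = dm C f \<Longrightarrow> cd C g = cd C f \<Longrightarrow> madd C f g \<in> Ar"
  using madd_Hom_arr by (simp add: Hom_iff)
lemma dm_madd[simp]: "f \<in> Ar \<Longrightarrow> g \<in> Ar \<Longrightarrow> dm C g = dm C f \<Longrightarrow> cd C g = cd C f \<Longrightarrow> dm C (madd C f g) = dm C f"
  using madd_Hom_arr by (simp add: Hom_iff)
lemma cd_madd[simp]: "f \<in> Ar \<Longrightarrow> g \<in> Ar \<Longrightarrow> dm C g = dm C f \<Longrightarrow> cd C g = cd C f \<Longrightarrow> cd C (madd C f g) = cd C f"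
  using madd_Hom_arr by (simp add: Hom_iff)

lemma mneg_Hom_arr: "f \<in> Ar \<Longrightarrow> mneg C f \<in> Hom C (dm C f) (cd C f)"
  by (rule mneg_Hom) (auto simp: Hom_iff)
lemma mneg_arr[simp]: "f \<in> Ar \<Longrightarrow> mneg C f \<in> Ar" using mneg_Hom_arr by (simp add: Hom_iff)
lemma dm_mneg[simp]: "f \<in> Ar \<Longrightarrow> dm C (mneg C f) = dm C f" using mneg_Hom_arr by (simp add: Hom_iff)
lemma cd_mneg[simp]: "f \<in> Ar \<Longrightarrow> cd C (mneg C f) = cd C f" using mneg_Hom_arr by (simp add: Hom_iff)

lemma madd_assoc[simp]: "f \<in> Ar \<Longrightarrow> g \<in> Ar \<Longrightarrow> h \<in> Ar \<Longrightarrow> dm C g = dm C f \<Longrightarrow> cd C g = cd C f \<Longrightarrow>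
   dm C h = dm C f \<Longrightarrow> cd C h = cd C f \<Longrightarrow> madd C (madd C f g) h = madd C f (madd C g h)"
  by (rule madd_assoc_Hom[of "dm C f" "cd C f"]) (auto simp: Hom_iff)
lemma madd_comm: "f \<in> Ar \<Longrightarrow> g \<in> Ar \<Longrightarrow> dm C g = dm C f \<Longrightarrow> cd C g = cd C f \<Longrightarrow>
   madd C f g = madd C g f"
  by (rule madd_comm_Hom[of "dm C f" "cd C f"]) (auto simp: Hom_iff)
lemma madd_lcomm: "f \<in> Ar \<Longrightarrow> g \<in> Ar \<Longrightarrow> h \<in> Ar \<Longrightarrow> dm C g = dm C f \<Longrightarrow> cd C g = cd C f \<Longrightarrow>
   dm C h = dm C f \<Longrightarrow> cd C h = cd C f \<Longrightarrow> madd C f (madd C g h) = madd C g (madd C f h)"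
  by (metis madd_assoc madd_comm)
lemma zero_madd[simp]: "f \<in> Ar \<Longrightarrow> X = dm C f \<Longrightarrow> Y = cd C f \<Longrightarrow> madd C (mzero C X Y) f = f"
  using mzero_madd_Hom[of "dm C f" "cd C f" f] by (simp add: Hom_iff)
lemma madd_zero[simp]: "f \<in> Ar \<Longrightarrow> X = dm C f \<Longrightarrow> Y = cd C f \<Longrightarrow> madd C f (mzero C X Y) = f"
  by (metis zero_madd madd_comm mzero_arr dm_mzero cd_mzero dm_obj cd_obj)
lemma mneg_madd_self[simp]: "f \<in> Ar \<Longrightarrow> madd C (mneg C f) f = mzero C (dm C f) (cd C f)"
  using mneg_madd_Hom[of "dm C f" "cd C f" f] by (simp add: Hom_iff)
lemma madd_mneg_self[simp]: "f \<in> Ar \<Longrightarrow> madd C f (mneg C f) = mzero C (dm C f) (cd C f)"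
  by (metis mneg_madd_self madd_comm mneg_arr dm_mneg cd_mneg)
lemma mneg_madd_cancel_left[simp]: "f \<in> Ar \<Longrightarrow> g \<in> Ar \<Longrightarrow> dm C g = dm C f \<Longrightarrow> cd C g = cd C f \<Longrightarrow>
   madd C (mneg C f) (madd C f g) = g"
  by (metis madd_assoc[of "mneg C f" f g] mneg_madd_self zero_madd mneg_arr dm_mneg cd_mneg)
lemma madd_mneg_cancel_left[simp]: "f \<in> Ar \<Longrightarrow> g \<in> Ar \<Longrightarrow> dm C g = dm C f \<Longrightarrow> cd C g = cd C f \<Longrightarrow>
   madd C f (madd C (mneg C f) g) = g"
  by (metis madd_assoc[of f "mneg C f" g] madd_mneg_self zero_madd mneg_arr dm_mneg cd_mneg)

lemma madd_mneg_cancel_outer[simp]: "x \<in> Ar \<Longrightarrow> y \<in> Ar \<Longrightarrow> dm C y = dm C x \<Longrightarrow> cd C y = cd C x \<Longrightarrow> madd C x (madd C y (mneg C x)) = y"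
  by (subst madd_comm[of y "mneg C x"]) auto
lemma mneg_madd_cancel_outer[simp]: "x \<in> Ar \<Longrightarrow> y \<in> Ar \<Longrightarrow> dm C y = dm C x \<Longrightarrow> cd C y = cd C x \<Longrightarrow> madd C (mneg C x) (madd C y x) = y"
  by (subst madd_comm[of y x]) auto
lemma madd_mneg_cancel_inner[simp]: "x \<in> Ar \<Longrightarrow> y \<in> Ar \<Longrightarrow> z \<in> Ar \<Longrightarrow> dm C y = dm C x \<Longrightarrow> cd C y = cd C x \<Longrightarrow> dm C z = dm C x \<Longrightarrow> cd C z = cd C x \<Longrightarrow>
   madd C x (madd C y (madd C (mneg C x) z)) = madd C y z"
  by (subst madd_lcomm[of y "mneg C x"]) auto
lemma mneg_madd_cancel_inner[simp]: "x \<in> Ar \<Longrightarrow> y \<in> Ar \<Longrightarrow> z \<in> Ar \<Longrightarrow> dm C y = dm C x \<Longrightarrow> cd C y = cd C x \<Longrightarrow> dm C z = dm C x \<Longrightarrow> cd C z = cd C x \<Longrightarrow>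
   madd C (mneg C x) (madd C y (madd C x z)) = madd C y z"
  by (subst madd_lcomm[of y x]) auto

lemma comp_madd_r[simp]: "f \<in> Ar \<Longrightarrow> f' \<in> Ar \<Longrightarrow> g \<in> Ar \<Longrightarrow> dm C f' = dm C f \<Longrightarrow> cd C f' = cd C f \<Longrightarrow>
   dm C g = cd C f \<Longrightarrow> comp C g (madd C f f') = madd C (comp C g f) (comp C g f')"
proof -
  assume a: "f \<in> Ar" "f' \<in> Ar" "g \<in> Ar" "dm C f' = dm C f" "cd C f' = cd C f" "dm C g = cd C f"
  have "\<forall>X Y Z f f' g. f \<in> Hom C X Y \<longrightarrow> f' \<in> Hom C X Y \<longrightarrow> g \<in> Hom C Y Z \<longrightarrow>
        comp C g (madd C f f') = madd C (comp C g f) (comp C g f')" using preadditive by (simp add: is_preadditive_def)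
  thus ?thesis using a by (auto simp: Hom_iff)
qed
lemma comp_madd_l[simp]: "f \<in> Ar \<Longrightarrow> g \<in> Ar \<Longrightarrow> g' \<in> Ar \<Longrightarrow> dm C g' = dm C g \<Longrightarrow> cd C g' = cd C g \<Longrightarrow>
   dm C g = cd C f \<Longrightarrow> comp C (madd C g g') f = madd C (comp C g f) (comp C g' f)"
proof -
  assume a: "f \<in> Ar" "g \<in> Ar" "g' \<in> Ar" "dm C g' = dm C g" "cd C g' = cd C g" "dm C g = cd C f"
  have "\<forall>X Y Z f g g'. f \<in> Hom C X Y \<longrightarrow> g \<in> Hom C Y Z \<longrightarrow> g' \<in> Hom C Y Z \<longrightarrow>
        comp C (madd C g g') f = madd C (comp C g f) (comp C g' f)" using preadditive by (simp add: is_preadditive_def)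
  thus ?thesis using a by (auto simp: Hom_iff)
qed

lemma madd_idem_zero: "p \<in> Ar \<Longrightarrow> madd C p p = p \<Longrightarrow> p = mzero C (dm C p) (cd C p)"
  by (metis mneg_madd_cancel_left mneg_madd_self)

lemma comp_zero_r[simp]: "g \<in> Ar \<Longrightarrow> X \<in> Ob \<Longrightarrow> Y = dm C g \<Longrightarrow> comp C g (mzero C X Y) = mzero C X (cd C g)"
proof -
  assume a: "g \<in> Ar" "X \<in> Ob" "Y = dm C g"
  let ?z = "mzero C X Y"
  have "comp C g (madd C ?z ?z) = madd C (comp C g ?z) (comp C g ?z)" by (rule comp_madd_r) (use a in auto)
  hence "madd C (comp C g ?z) (comp C g ?z) = comp C g ?z" using a by simp
  from madd_idem_zero[OF _ this] show ?thesis using a by simp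
qed
lemma comp_zero_l[simp]: "f \<in> Ar \<Longrightarrow> Z \<in> Ob \<Longrightarrow> Y = cd C f \<Longrightarrow> comp C (mzero C Y Z) f = mzero C (dm C f) Z"
proof -
  assume a: "f \<in> Ar" "Z \<in> Ob" "Y = cd C f"
  let ?z = "mzero C Y Z"
  have "comp C (madd C ?z ?z) f = madd C (comp C ?z f) (comp C ?z f)" by (rule comp_madd_l) (use a in auto)
  hence "madd C (comp C ?z f) (comp C ?z f) = comp C ?z f" using a by simp
  from madd_idem_zero[OF _ this] show ?thesis using a by simp
qed

lemma mneg_unique: "f \<in> Ar \<Longrightarrow> g \<in> Ar \<Longrightarrow> dm C g = dm C f \<Longrightarrow> cd C g = cd C f \<Longrightarrow>
   madd C f g = mzero C (dm C f) (cd C f) \<Longrightarrow> g = mneg C f"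
  by (metis mneg_madd_cancel_left madd_zero mneg_arr dm_mneg cd_mneg)

lemma mneg_mneg[simp]: "f \<in> Ar \<Longrightarrow> mneg C (mneg C f) = f"
  by (metis mneg_unique mneg_madd_self mneg_arr dm_mneg cd_mneg)

lemma comp_mneg_r[simp]: "f \<in> Ar \<Longrightarrow> g \<in> Ar \<Longrightarrow> dm C g = cd C f \<Longrightarrow> comp C g (mneg C f) = mneg C (comp C g f)"
proof -
  assume a: "f \<in> Ar" "g \<in> Ar" "dm C g = cd C f"
  have "madd C (comp C g f) (comp C g (mneg C f)) = comp C g (madd C f (mneg C f))"
    by (rule comp_madd_r[symmetric]) (use a in auto)
  also have "\<dots> = mzero C (dm C f) (cd C g)" using a by simp
  finally show ?thesis using a by (intro mneg_unique) auto
qed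
lemma comp_mneg_l[simp]: "f \<in> Ar \<Longrightarrow> g \<in> Ar \<Longrightarrow> dm C g = cd C f \<Longrightarrow> comp C (mneg C g) f = mneg C (comp C g f)"
proof -
  assume a: "f \<in> Ar" "g \<in> Ar" "dm C g = cd C f"
  have "madd C (comp C g f) (comp C (mneg C g) f) = comp C (madd C g (mneg C g)) f"
    by (rule comp_madd_l[symmetric]) (use a in auto)
  also have "\<dots> = mzero C (dm C f) (cd C g)" using a by simp
  finally show ?thesis using a by (intro mneg_unique) auto
qed
lemma mneg_madd[simp]: "f \<in> Ar \<Longrightarrow> g \<in> Ar \<Longrightarrow> dm C g = dm C f \<Longrightarrow> cd C g = cd C f \<Longrightarrow>
  mneg C (madd C f g) = madd C (mneg C f) (mneg C g)"
proof -
  assume a: "f \<in> Ar" "g \<in> Ar" "dm C g = dm C f" "cd C g = cd C f"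
  have "madd C (madd C f g) (madd C (mneg C f) (mneg C g)) = mzero C (dm C f) (cd C f)"
    using a by (simp add: madd_lcomm[of g "mneg C f"])
  thus ?thesis using a by (metis mneg_unique madd_arr mneg_arr dm_mneg cd_mneg dm_madd cd_madd)
qed
lemma mneg_zero[simp]: "X \<in> Ob \<Longrightarrow> Y \<in> Ob \<Longrightarrow> mneg C (mzero C X Y) = mzero C X Y"
  by (metis mneg_unique zero_madd mzero_arr dm_mzero cd_mzero)

lemma Hom_objs: "f \<in> Hom C X Y \<Longrightarrow> X \<in> Ob \<and> Y \<in> Ob" by (auto simp: Hom_iff)

lemma hsum_Hom: "X \<in> Ob \<Longrightarrow> Y \<in> Ob \<Longrightarrow> (\<And>k. k < n \<Longrightarrow> f k \<in> Hom C X Y) \<Longrightarrow> hsum C X Y f n \<in> Hom C X Y"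
  by (induction n) (auto intro: madd_Hom mzero_Hom)

lemma hsum_cong: "(\<And>k. k < n \<Longrightarrow> f k = g k) \<Longrightarrow> hsum C X Y f n = hsum C X Y g n"
  by (induction n) auto

lemma comp_hsum_l: "X \<in> Ob \<Longrightarrow> h \<in> Hom C Y Z \<Longrightarrow> (\<And>k. k < n \<Longrightarrow> f k \<in> Hom C X Y) \<Longrightarrow>
   comp C h (hsum C X Y f n) = hsum C X Z (\<lambda>k. comp C h (f k)) n"
proof (induction n)
  case 0 thus ?case by (simp add: Hom_iff)
next
  case (Suc n)
  have hs: "hsum C X Y f n \<in> Hom C X Y" using Suc by (intro hsum_Hom) (auto simp: Hom_iff)
  have "comp C h (hsum C X Y f (Suc n)) = madd C (comp C h (hsum C X Y f n)) (comp C h (f n))"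
    using Suc.prems hs by (simp add: Hom_iff)
  thus ?case using Suc by simp
qed

lemma comp_hsum_r: "Z \<in> Ob \<Longrightarrow> h \<in> Hom C X Y \<Longrightarrow> (\<And>k. k < n \<Longrightarrow> f k \<in> Hom C Y Z) \<Longrightarrow>
   comp C (hsum C Y Z f n) h = hsum C X Z (\<lambda>k. comp C (f k) h) n"
proof (induction n)
  case 0 thus ?case by (simp add: Hom_iff)
next
  case (Suc n)
  have hs: "hsum C Y Z f n \<in> Hom C Y Z" using Suc by (intro hsum_Hom) (auto simp: Hom_iff)
  have "comp C (hsum C Y Z f (Suc n)) h = madd C (comp C (hsum C Y Z f n) h) (comp C (f n) h)"
    using Suc.prems hs by (simp add: Hom_iff)
  thus ?case using Suc by simp
qed

lemma hsum_zero: "X \<in> Ob \<Longrightarrow> Y \<in> Ob \<Longrightarrow> (\<And>k. k < n \<Longrightarrow> f k = mzero C X Y) \<Longrightarrow> hsum C X Y f n = mzero C X Y"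
  by (induction n) auto

lemma hsum_single: "X \<in> Ob \<Longrightarrow> Y \<in> Ob \<Longrightarrow> j < n \<Longrightarrow> f j \<in> Hom C X Y \<Longrightarrow> f j = y \<Longrightarrow>
   (\<And>k. k < n \<Longrightarrow> k \<noteq> j \<Longrightarrow> f k = mzero C X Y) \<Longrightarrow> hsum C X Y f n = y"
proof (induction n)
  case 0 thus ?case by simp
next
  case (Suc n)
  show ?case
  proof (cases "j = n")
    case True
    have "hsum C X Y f n = mzero C X Y" using Suc True by (intro hsum_zero) auto
    thus ?thesis using Suc True by (simp add: Hom_iff)
  next
    case False
    hence "hsum C X Y f n = y" using Suc by auto
    thus ?thesis using Suc False by (simp add: Hom_iff)
  qed
qed

lemma hsum_remove: "X \<in> Ob \<Longrightarrow> Y \<in> Ob \<Longrightarrow> j < n \<Longrightarrow> (\<And>k. k < n \<Longrightarrow> f k \<in> Hom C X Y) \<Longrightarrow>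
  hsum C X Y f n = madd C (hsum C X Y (\<lambda>l. f (skip_index j l)) (n - 1)) (f j)"
proof (induction n)
  case 0 thus ?case by simp
next
  case (Suc m)
  show ?case
  proof (cases "j = m")
    case True
    have "hsum C X Y (\<lambda>l. f (skip_index j l)) m = hsum C X Y f m"
      using True by (intro hsum_cong) (simp add: skip_index_def)
    thus ?thesis using True by simp
  next
    case False
    hence jm: "j < m" using Suc by simp
    then obtain m' where m': "m = Suc m'" by (cases m) auto
    have IH: "hsum C X Y f m = madd C (hsum C X Y (\<lambda>l. f (skip_index j l)) m') (f j)"
      using Suc jm m' by simp
    have hs: "hsum C X Y (\<lambda>l. f (skip_index j l)) m' \<in> Hom C X Y"
      using Suc jm m' by (intro hsum_Hom) (auto simp: skip_index_def)
    have skip_index: "skip_index j m' = m" using jm m' by (simp add: skip_index_def)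
    have fs: "f j \<in> Hom C X Y" "f m \<in> Hom C X Y" using Suc jm by auto
    have "hsum C X Y f (Suc m) = madd C (madd C (hsum C X Y (\<lambda>l. f (skip_index j l)) m') (f j)) (f m)"
      using IH by simp
    also have "\<dots> = madd C (madd C (hsum C X Y (\<lambda>l. f (skip_index j l)) m') (f m)) (f j)"
      using hs fs by (simp add: Hom_iff madd_comm[of "f j" "f m"])
    also have "\<dots> = madd C (hsum C X Y (\<lambda>l. f (skip_index j l)) (Suc m - 1)) (f j)"
      using m' skip_index by simp
    finally show ?thesis .
  qed
qed

end

section \<open>Finite direct sum decompositions\<close>

definition decomposition :: "('o,'m,'e,'z) extri_data_scheme \<Rightarrow> 'o \<Rightarrow> nat \<Rightarrow> (nat \<Rightarrow> 'o) \<Rightarrow> (nat \<Rightarrow> 'm) \<Rightarrow> (nat \<Rightarrow> 'm) \<Rightarrow> bool" where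
  "decomposition C Y n Xs ij pj \<longleftrightarrow> Y \<in> obj C \<and>
     (\<forall>k < n. Xs k \<in> obj C \<and> ij k \<in> Hom C (Xs k) Y \<and> pj k \<in> Hom C Y (Xs k)) \<and>
     (\<forall>j < n. \<forall>k < n. comp C (pj j) (ij k) = (if j = k then iden C (Xs k) else mzero C (Xs k) (Xs j))) \<and>
     hsum C Y Y (\<lambda>k. comp C (ij k) (pj k)) n = iden C Y"

context preadditive_cat begin

lemma biprodD: assumes "biprod C X1 X2 P i1 i2 p1 p2"
  shows "X1 \<in> Ob" "X2 \<in> Ob" "P \<in> Ob" "i1 \<in> Ar" "i2 \<in> Ar" "p1 \<in> Ar" "p2 \<in> Ar"
   "dm C i1 = X1" "cd C i1 = P" "dm C i2 = X2" "cd C i2 = P" "dm C p1 = P" "cd C p1 = X1"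
   "dm C p2 = P" "cd C p2 = X2"
   "comp C p1 i1 = iden C X1" "comp C p2 i2 = iden C X2"
   "comp C p2 i1 = mzero C X1 X2" "comp C p1 i2 = mzero C X2 X1"
   "madd C (comp C i1 p1) (comp C i2 p2) = iden C P"
  using assms by (auto simp: biprod_def Hom_iff)

lemma biprodI: "X1 \<in> Ob \<Longrightarrow> X2 \<in> Ob \<Longrightarrow> P \<in> Ob \<Longrightarrow> i1 \<in> Hom C X1 P \<Longrightarrow> i2 \<in> Hom C X2 P \<Longrightarrow>
   p1 \<in> Hom C P X1 \<Longrightarrow> p2 \<in> Hom C P X2 \<Longrightarrow>
   comp C p1 i1 = iden C X1 \<Longrightarrow> comp C p2 i2 = iden C X2 \<Longrightarrow>
   comp C p2 i1 = mzero C X1 X2 \<Longrightarrow> comp C p1 i2 = mzero C X2 X1 \<Longrightarrow>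
   madd C (comp C i1 p1) (comp C i2 p2) = iden C P \<Longrightarrow> biprod C X1 X2 P i1 i2 p1 p2"
  by (simp add: biprod_def)

lemma comp_reassoc3: "comp C a (comp C b c) = d \<Longrightarrow> a \<in> Ar \<Longrightarrow> b \<in> Ar \<Longrightarrow> c \<in> Ar \<Longrightarrow> x \<in> Ar \<Longrightarrow>
  dm C a = cd C b \<Longrightarrow> dm C b = cd C c \<Longrightarrow> dm C c = cd C x \<Longrightarrow>
   comp C a (comp C b (comp C c x)) = comp C d x"
  by (metis comp_assoc comp_arr dm_comp cd_comp)

lemma biprod_inj_proj_complement: "biprod C X1 X2 P i1 i2 p1 p2 \<Longrightarrow> comp C i1 p1 = madd C (iden C P) (mneg C (comp C i2 p2))"
proof -
  assume b: "biprod C X1 X2 P i1 i2 p1 p2"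
  note B = biprodD[OF b]
  have "madd C (madd C (comp C i1 p1) (comp C i2 p2)) (mneg C (comp C i2 p2)) = comp C i1 p1" using B(1-19) by simp
  from this[unfolded B(20)] show ?thesis by (rule sym)
qed

lemma decompositionD: assumes "decomposition C Y n Xs ij pj"
  shows "Y \<in> Ob" "\<And>k. k < n \<Longrightarrow> Xs k \<in> Ob" "\<And>k. k < n \<Longrightarrow> ij k \<in> Hom C (Xs k) Y"
    "\<And>k. k < n \<Longrightarrow> pj k \<in> Hom C Y (Xs k)"
    "\<And>j k. j < n \<Longrightarrow> k < n \<Longrightarrow> comp C (pj j) (ij k) = (if j = k then iden C (Xs k) else mzero C (Xs k) (Xs j))"
    "hsum C Y Y (\<lambda>k. comp C (ij k) (pj k)) n = iden C Y"
  using assms by (auto simp: decomposition_def)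

lemma comp_reassoc: "comp C a b = c \<Longrightarrow> a \<in> Ar \<Longrightarrow> b \<in> Ar \<Longrightarrow> x \<in> Ar \<Longrightarrow> dm C a = cd C b \<Longrightarrow> dm C b = cd C x \<Longrightarrow>
   comp C a (comp C b x) = comp C c x"
  by (metis comp_assoc)

lemma skip_index_less: "j < n \<Longrightarrow> l < n - 1 \<Longrightarrow> skip_index j l < n" by (auto simp: skip_index_def)
lemma skip_index_neq: "skip_index j l \<noteq> j" by (simp add: skip_index_def)
lemma skip_index_eq_iff: "skip_index j l = skip_index j m \<longleftrightarrow> l = m" by (auto simp: skip_index_def)

lemma decomposition_arrD: assumes "decomposition C Y n Xs ij pj" "k < n"
  shows "ij k \<in> Ar" "dm C (ij k) = Xs k" "cd C (ij k) = Y" "pj k \<in> Ar" "dm C (pj k) = Y" "cd C (pj k) = Xs k"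
   "Xs k \<in> Ob" "Y \<in> Ob"
  using decompositionD[OF assms(1)] assms(2) by (auto simp: Hom_iff)

lemma decomposition_proj_inj_comp: "decomposition C Y n Xs ij pj \<Longrightarrow> j < n \<Longrightarrow> k < n \<Longrightarrow> x \<in> Ar \<Longrightarrow> cd C x = Xs k \<Longrightarrow>
  comp C (pj j) (comp C (ij k) x) = (if j = k then x else mzero C (dm C x) (Xs j))"
proof -
  assume d: "decomposition C Y n Xs ij pj" and jk: "j < n" "k < n" and x: "x \<in> Ar" "cd C x = Xs k"
  note D = decompositionD[OF d]
  have "comp C (pj j) (comp C (ij k) x) = comp C (comp C (pj j) (ij k)) x"
    using D(3,4)[of k] D(4)[of j] jk x by (simp add: Hom_iff)
  also have "\<dots> = (if j = k then x else mzero C (dm C x) (Xs j))"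
    using D(5)[OF jk] D(2)[of j] D(2)[of k] jk x by simp
  finally show ?thesis .
qed

lemma decomposition_proj_inj: "decomposition C Y n Xs ij pj \<Longrightarrow> j < n \<Longrightarrow> k < n \<Longrightarrow> 
  comp C (pj j) (ij k) = (if j = k then iden C (Xs k) else mzero C (Xs k) (Xs j))"
  using decompositionD(5) by blast

lemma decomposition_split_summand:
  assumes d: "decomposition C Y0 n Xs ij pj" and j: "j < n" and d': "decomposition C Y' (n-1) (\<lambda>l. Xs (skip_index j l)) e q"
  defines "\<alpha> \<equiv> hsum C Y' Y0 (\<lambda>l. comp C (ij (skip_index j l)) (q l)) (n-1)"
    and "\<beta> \<equiv> hsum C Y0 Y' (\<lambda>l. comp C (e l) (pj (skip_index j l))) (n-1)"
  shows "biprod C Y' (Xs j) Y0 \<alpha> (ij j) \<beta> (pj j)"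
    and "\<And>l. l < n - 1 \<Longrightarrow> comp C (pj (skip_index j l)) \<alpha> = q l"
    and "\<And>l. l < n - 1 \<Longrightarrow> comp C \<beta> (ij (skip_index j l)) = e l"
proof -
  note D = decompositionD[OF d] and D' = decompositionD[OF d']
  have skl: "\<And>l. l < n - 1 \<Longrightarrow> skip_index j l < n" using j skip_index_less by blast
  have Hs: "\<And>l. l < n - 1 \<Longrightarrow> ij (skip_index j l) \<in> Ar" "\<And>l. l < n - 1 \<Longrightarrow> dm C (ij (skip_index j l)) = Xs (skip_index j l)"
    "\<And>l. l < n - 1 \<Longrightarrow> cd C (ij (skip_index j l)) = Y0" 
    "\<And>l. l < n - 1 \<Longrightarrow> pj (skip_index j l) \<in> Ar" "\<And>l. l < n - 1 \<Longrightarrow> dm C (pj (skip_index j l)) = Y0"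
    "\<And>l. l < n - 1 \<Longrightarrow> cd C (pj (skip_index j l)) = Xs (skip_index j l)" "\<And>l. l < n - 1 \<Longrightarrow> Xs (skip_index j l) \<in> Ob"
    using decomposition_arrD[OF d skl] by auto
  note DA = decomposition_arrD[OF d] decomposition_arrD[OF d']
  have aH: "\<alpha> \<in> Hom C Y' Y0" unfolding \<alpha>_def
    using D D' skl Hs DA by (intro hsum_Hom comp_Hom) (auto simp: Hom_iff)
  have bH: "\<beta> \<in> Hom C Y0 Y'" unfolding \<beta>_def
    using D D' skl Hs DA by (intro hsum_Hom comp_Hom) (auto simp: Hom_iff)
  show A: "\<And>l. l < n - 1 \<Longrightarrow> comp C (pj (skip_index j l)) \<alpha> = q l"
  proof -
    fix l assume l: "l < n - 1"
    have "comp C (pj (skip_index j l)) \<alpha> = hsum C Y' (Xs (skip_index j l)) (\<lambda>m. comp C (pj (skip_index j l)) (comp C (ij (skip_index j m)) (q m))) (n-1)"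
      unfolding \<alpha>_def using D D' skl Hs DA l by (intro comp_hsum_l) (auto simp: Hom_iff)
    also have "\<dots> = q l"
      by (rule hsum_single[where j=l]) (insert D D' skl Hs DA l, auto simp: decomposition_proj_inj_comp[OF d] skip_index_eq_iff Hom_iff)
    finally show "comp C (pj (skip_index j l)) \<alpha> = q l" .
  qed
  have A2: "comp C (pj j) \<alpha> = mzero C Y' (Xs j)"
  proof -
    have "comp C (pj j) \<alpha> = hsum C Y' (Xs j) (\<lambda>m. comp C (pj j) (comp C (ij (skip_index j m)) (q m))) (n-1)"
      unfolding \<alpha>_def using D D' skl Hs DA j by (intro comp_hsum_l) (auto simp: Hom_iff)
    also have "\<dots> = mzero C Y' (Xs j)"
      using D D' skl Hs DA j by (intro hsum_zero) (auto simp: decomposition_proj_inj_comp[OF d] skip_index_neq[symmetric] Hom_iff)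
    finally show ?thesis .
  qed
  show B: "\<And>l. l < n - 1 \<Longrightarrow> comp C \<beta> (ij (skip_index j l)) = e l"
  proof -
    fix l assume l: "l < n - 1"
    have "comp C \<beta> (ij (skip_index j l)) = hsum C (Xs (skip_index j l)) Y' (\<lambda>m. comp C (comp C (e m) (pj (skip_index j m))) (ij (skip_index j l))) (n-1)"
      unfolding \<beta>_def using D D' skl Hs DA l by (intro comp_hsum_r) (auto simp: Hom_iff)
    also have "\<dots> = e l"
      by (rule hsum_single[where j=l]) (insert D D' skl Hs DA l, auto simp: decomposition_proj_inj[OF d] skip_index_eq_iff Hom_iff)
    finally show "comp C \<beta> (ij (skip_index j l)) = e l" .
  qed
  have B2: "comp C \<beta> (ij j) = mzero C (Xs j) Y'"
  proof -
    have "comp C \<beta> (ij j) = hsum C (Xs j) Y' (\<lambda>m. comp C (comp C (e m) (pj (skip_index j m))) (ij j)) (n-1)"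
      unfolding \<beta>_def using D D' skl Hs DA j by (intro comp_hsum_r) (auto simp: Hom_iff)
    also have "\<dots> = mzero C (Xs j) Y'"
      using D D' skl Hs DA j by (intro hsum_zero) (auto simp: decomposition_proj_inj[OF d] skip_index_neq Hom_iff)
    finally show ?thesis .
  qed
  have BA: "comp C \<beta> \<alpha> = iden C Y'"
  proof -
    have "comp C \<beta> \<alpha> = hsum C Y' Y' (\<lambda>m. comp C \<beta> (comp C (ij (skip_index j m)) (q m))) (n-1)"
      unfolding \<alpha>_def using D D' skl Hs DA bH by (intro comp_hsum_l) (auto simp: Hom_iff)
    also have "\<dots> = hsum C Y' Y' (\<lambda>m. comp C (e m) (q m)) (n-1)"
    proof (rule hsum_cong)
      fix m assume m: "m < n - 1"
      have "comp C \<beta> (comp C (ij (skip_index j m)) (q m)) = comp C (comp C \<beta> (ij (skip_index j m))) (q m)"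
        using D D' skl Hs DA m bH by (simp add: Hom_iff)
      thus "comp C \<beta> (comp C (ij (skip_index j m)) (q m)) = comp C (e m) (q m)" using B m by simp
    qed
    also have "\<dots> = iden C Y'" using D' by simp
    finally show ?thesis .
  qed
  have QB: "\<And>l. l < n - 1 \<Longrightarrow> comp C (q l) \<beta> = pj (skip_index j l)"
  proof -
    fix l assume l: "l < n - 1"
    have "comp C (q l) \<beta> = hsum C Y0 (Xs (skip_index j l)) (\<lambda>m. comp C (q l) (comp C (e m) (pj (skip_index j m)))) (n-1)"
      unfolding \<beta>_def using D D' skl Hs DA l by (intro comp_hsum_l) (auto simp: Hom_iff)
    also have "\<dots> = pj (skip_index j l)"
      by (rule hsum_single[where j=l]) (insert D D' skl Hs DA l, auto simp: decomposition_proj_inj_comp[OF d'] Hom_iff)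
    finally show "comp C (q l) \<beta> = pj (skip_index j l)" .
  qed
  have AB: "comp C \<alpha> \<beta> = hsum C Y0 Y0 (\<lambda>l. comp C (ij (skip_index j l)) (pj (skip_index j l))) (n-1)"
  proof -
    have "comp C \<alpha> \<beta> = hsum C Y0 Y0 (\<lambda>m. comp C (comp C (ij (skip_index j m)) (q m)) \<beta>) (n-1)"
      unfolding \<alpha>_def using D D' skl Hs DA bH by (intro comp_hsum_r) (auto simp: Hom_iff)
    also have "\<dots> = hsum C Y0 Y0 (\<lambda>l. comp C (ij (skip_index j l)) (pj (skip_index j l))) (n-1)"
    proof (rule hsum_cong)
      fix m assume m: "m < n - 1"
      have "comp C (comp C (ij (skip_index j m)) (q m)) \<beta> = comp C (ij (skip_index j m)) (comp C (q m) \<beta>)"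
        using D D' skl Hs DA m bH by (simp add: Hom_iff)
      thus "comp C (comp C (ij (skip_index j m)) (q m)) \<beta> = comp C (ij (skip_index j m)) (pj (skip_index j m))" using QB m by simp
    qed
    finally show ?thesis .
  qed
  have "madd C (comp C \<alpha> \<beta>) (comp C (ij j) (pj j)) = iden C Y0"
    unfolding AB using hsum_remove[of Y0 Y0 j n "\<lambda>k. comp C (ij k) (pj k)"] D j
    by (auto simp: Hom_iff)
  thus "biprod C Y' (Xs j) Y0 \<alpha> (ij j) \<beta> (pj j)"
    using D D' aH bH BA A2 B2 j by (intro biprodI) auto
qed

lemma biprod_exchange:
  assumes b: "biprod C Y' A Y0 \<alpha> \<iota> \<beta> \<pi>" and s: "s \<in> Hom C A' Y0" and v: "v \<in> Hom C A A'"
    and vl: "comp C v (comp C \<pi> s) = iden C A'" and vr: "comp C \<pi> (comp C s v) = iden C A"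
  shows "biprod C Y' A' Y0 \<alpha> s (madd C \<beta> (mneg C (comp C \<beta> (comp C s (comp C v \<pi>))))) (comp C v \<pi>)"
proof -
  note B = biprodD[OF b]
  have S: "s \<in> Ar" "dm C s = A'" "cd C s = Y0" "v \<in> Ar" "dm C v = A" "cd C v = A'" "A' \<in> Ob"
    using s v by (auto simp: Hom_iff)
  have vr2: "\<And>x. x \<in> Ar \<Longrightarrow> cd C x = A \<Longrightarrow> comp C \<pi> (comp C s (comp C v x)) = x"
  proof -
    fix x assume x: "x \<in> Ar" "cd C x = A"
    have "comp C \<pi> (comp C s (comp C v x)) = comp C (comp C \<pi> (comp C s v)) x"
      using x B S by simp
    thus "comp C \<pi> (comp C s (comp C v x)) = x" using vr x by simp
  qed
  have vl2: "\<And>x. x \<in> Ar \<Longrightarrow> cd C x = A' \<Longrightarrow> comp C v (comp C \<pi> (comp C s x)) = x"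
  proof -
    fix x assume x: "x \<in> Ar" "cd C x = A'"
    have "comp C v (comp C \<pi> (comp C s x)) = comp C (comp C v (comp C \<pi> s)) x"
      using x B S by simp
    thus "comp C v (comp C \<pi> (comp C s x)) = x" using vl x by simp
  qed
  have ab: "comp C \<alpha> \<beta> = madd C (iden C Y0) (mneg C (comp C \<iota> \<pi>))"
    by (rule biprod_inj_proj_complement[OF b])
  have ab2: "\<And>x. x \<in> Ar \<Longrightarrow> cd C x = Y0 \<Longrightarrow> comp C \<alpha> (comp C \<beta> x) = madd C x (mneg C (comp C \<iota> (comp C \<pi> x)))"
  proof -
    fix x assume x: "x \<in> Ar" "cd C x = Y0"
    have "comp C \<alpha> (comp C \<beta> x) = comp C (comp C \<alpha> \<beta>) x" using x B by simp
    thus "comp C \<alpha> (comp C \<beta> x) = madd C x (mneg C (comp C \<iota> (comp C \<pi> x)))" using x B by (simp add: ab)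
  qed
  show ?thesis
  proof (rule biprodI)
    show "comp C (comp C v \<pi>) s = iden C A'" using vl B S by simp
    show "comp C (madd C \<beta> (mneg C (comp C \<beta> (comp C s (comp C v \<pi>))))) \<alpha> = iden C Y'"
      using B S by simp
    show "comp C (comp C v \<pi>) \<alpha> = mzero C Y' A'" using B S by simp
    show "comp C (madd C \<beta> (mneg C (comp C \<beta> (comp C s (comp C v \<pi>))))) s = mzero C A' Y'"
      using B S vl2 vl by simp
    show "madd C (comp C \<alpha> (madd C \<beta> (mneg C (comp C \<beta> (comp C s (comp C v \<pi>)))))) (comp C s (comp C v \<pi>)) = iden C Y0"
      using B(1-19) S vr2 by (simp add: ab ab2)
    show "Y' \<in> Ob" "A' \<in> Ob" "Y0 \<in> Ob" using B S by auto
    show "\<alpha> \<in> Hom C Y' Y0" "s \<in> Hom C A' Y0" using B s by (auto simp: Hom_iff)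
    show "comp C v \<pi> \<in> Hom C Y0 A'" using B S by (simp add: Hom_iff)
    show "madd C \<beta> (mneg C (comp C \<beta> (comp C s (comp C v \<pi>)))) \<in> Hom C Y0 Y'"
    proof -
      have h: "comp C \<beta> (comp C s (comp C v \<pi>)) \<in> Hom C Y0 Y'"
        by (rule comp_Hom[OF comp_Hom[OF comp_Hom]]) (use B S s v in \<open>auto simp: Hom_iff\<close>)
      have h2: "\<beta> \<in> Hom C Y0 Y'" using B by (simp add: Hom_iff)
      show ?thesis by (intro madd_Hom mneg_Hom h h2) (use B in auto)
    qed
  qed
qed

lemma biprod_left_inverse_by_blocks:
  assumes b: "biprod C Y' A Y0 \<alpha> \<iota> \<beta> \<pi>" and u: "u \<in> Hom C Y0 Y0"
    and bx: "biprod C Y' A Y0 \<alpha> (comp C u \<iota>) \<beta>' \<pi>'"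
    and L: "L \<in> Hom C Y' Y'" and Lu: "comp C L (comp C \<beta>' (comp C u \<alpha>)) = iden C Y'"
  shows "\<exists>N \<in> Hom C Y0 Y0. comp C N u = iden C Y0"
proof -
  note B = biprodD[OF b] and BX = biprodD[OF bx]
  have uT: "u \<in> Ar" "dm C u = Y0" "cd C u = Y0" and LT: "L \<in> Ar" "dm C L = Y'" "cd C L = Y'"
    using u L by (auto simp: Hom_iff)
  define K where "K = comp C L \<beta>'"
  have KT: "K \<in> Ar" "dm C K = Y0" "cd C K = Y'" unfolding K_def using LT BX by auto
  \<comment> \<open>N u is the identity on both summands: K inverts u on Y', and \<pi>' inverts it on A modulo Y'.\<close>
  define N where "N = madd C (comp C \<alpha> K) (comp C \<iota> (madd C \<pi>' (mneg C (comp C \<pi>' (comp C u (comp C \<alpha> K))))))"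
  have NT: "N \<in> Ar" "dm C N = Y0" "cd C N = Y0" unfolding N_def using B BX KT uT by auto
  have Ka: "\<And>x. x \<in> Ar \<Longrightarrow> cd C x = Y' \<Longrightarrow> comp C K (comp C u (comp C \<alpha> x)) = x"
  proof -
    fix x assume x: "x \<in> Ar" "cd C x = Y'"
    have "comp C K (comp C u (comp C \<alpha> x)) = comp C (comp C L (comp C \<beta>' (comp C u \<alpha>))) x"
      unfolding K_def using x LT BX(1-15) uT by simp
    thus "comp C K (comp C u (comp C \<alpha> x)) = x" using Lu x by simp
  qed
  have Ki: "comp C K (comp C u \<iota>) = mzero C A Y'"
    unfolding K_def using LT BX(1-15) BX(19) B(1-15) uT by simp
  have Ki2: "\<And>x. x \<in> Ar \<Longrightarrow> cd C x = A \<Longrightarrow> comp C K (comp C u (comp C \<iota> x)) = mzero C (dm C x) Y'"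
    using Ki KT uT B(1-15) by (simp add: comp_reassoc3[OF Ki])
  have Pi2: "\<And>x. x \<in> Ar \<Longrightarrow> cd C x = A \<Longrightarrow> comp C \<pi>' (comp C u (comp C \<iota> x)) = x"
    using BX(1-15) B(1-15) uT by (simp add: comp_reassoc3[OF BX(17)])
  have Nua: "\<And>x. x \<in> Ar \<Longrightarrow> cd C x = Y' \<Longrightarrow> comp C N (comp C u (comp C \<alpha> x)) = comp C \<alpha> x"
    unfolding N_def using B(1-15) BX(1-15) KT uT by (simp add: Ka)
  have Nui: "\<And>x. x \<in> Ar \<Longrightarrow> cd C x = A \<Longrightarrow> comp C N (comp C u (comp C \<iota> x)) = comp C \<iota> x"
    unfolding N_def using B(1-15) BX(1-15) KT uT by (simp add: Ki2 Pi2)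
  have "comp C N u = comp C N (comp C u (madd C (comp C \<alpha> \<beta>) (comp C \<iota> \<pi>)))"
    using B(20) uT by simp
  also have "\<dots> = madd C (comp C \<alpha> \<beta>) (comp C \<iota> \<pi>)" using B(1-19) uT NT by (simp add: Nua Nui)
  also have "\<dots> = iden C Y0" by (rule B(20))
  finally show ?thesis using NT by (auto simp: Hom_iff)
qed

lemma isoI: "f \<in> Hom C X Y \<Longrightarrow> g \<in> Hom C Y X \<Longrightarrow> comp C g f = iden C X \<Longrightarrow> comp C f g = iden C Y \<Longrightarrow> is_iso C f X Y"
  by (auto simp: is_iso_def)

lemma is_unit_end_iff_iso: "f \<in> Hom C X X \<Longrightarrow> is_unit_end C X f \<longleftrightarrow> is_iso C f X X"
  by (auto simp: is_unit_end_def is_iso_def)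

lemma local_end_complement_iso: "local_end C A \<Longrightarrow> f \<in> Hom C A A \<Longrightarrow> \<not> is_iso C f A A \<Longrightarrow>
   is_iso C (madd C (iden C A) (mneg C f)) A A"
proof -
  assume l: "local_end C A" and f: "f \<in> Hom C A A" and n: "\<not> is_iso C f A A"
  have A: "A \<in> Ob" using l by (simp add: local_end_def)
  have "madd C (iden C A) (mneg C f) \<in> Hom C A A" using f A by (simp add: Hom_iff)
  thus ?thesis using l f n is_unit_end_iff_iso by (auto simp: local_end_def)
qed

lemma local_split_mono_iso:
  assumes lA: "local_end C A" and lB: "local_end C B" and z: "z \<in> Hom C A B" and w: "w \<in> Hom C B A"
    and wz: "comp C w z = iden C A"
  shows "is_iso C z A B"
proof -
  have A: "A \<in> Ob" and B: "B \<in> Ob" using lA lB by (auto simp: local_end_def)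
  have T: "z \<in> Ar" "dm C z = A" "cd C z = B" "w \<in> Ar" "dm C w = B" "cd C w = A" using z w by (auto simp: Hom_iff)
  have wz2: "\<And>x. x \<in> Ar \<Longrightarrow> cd C x = A \<Longrightarrow> comp C w (comp C z x) = x"
    using wz T by (metis comp_assoc comp_iden_l)
  let ?e = "comp C z w"
  have eH: "?e \<in> Hom C B B" using T by (simp add: Hom_iff)
  have "is_unit_end C B ?e \<or> is_unit_end C B (madd C (iden C B) (mneg C ?e))"
    using lB eH by (simp add: local_end_def)
  thus ?thesis
  proof
    assume "is_unit_end C B ?e"
    then obtain k where k: "k \<in> Hom C B B" "comp C k ?e = iden C B" by (auto simp: is_unit_end_def)
    have kT: "k \<in> Ar" "dm C k = B" "cd C k = B" using k by (auto simp: Hom_iff)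
    have "comp C (comp C k ?e) ?e = comp C k (comp C z (comp C w (comp C z w)))" using T kT by simp
    also have "\<dots> = comp C k ?e" using wz2 T by simp
    finally have "?e = iden C B" using k T kT B by simp
    thus ?thesis using T wz by (intro isoI[OF z w]) auto
  next
    assume "is_unit_end C B (madd C (iden C B) (mneg C ?e))"
    then obtain k where k: "k \<in> Hom C B B" "comp C k (madd C (iden C B) (mneg C ?e)) = iden C B"
      by (auto simp: is_unit_end_def)
    have kT: "k \<in> Ar" "dm C k = B" "cd C k = B" using k by (auto simp: Hom_iff)
    have "comp C (madd C (iden C B) (mneg C ?e)) z = mzero C A B" using T wz2 wz A B by simp
    hence "comp C k (comp C (madd C (iden C B) (mneg C ?e)) z) = mzero C A B" using kT T A B by simp
    hence "comp C (comp C k (madd C (iden C B) (mneg C ?e))) z = mzero C A B"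
      using kT T A B by (metis comp_assoc madd_arr mneg_arr iden_arr comp_arr dm_iden cd_iden dm_comp cd_comp dm_mneg cd_mneg dm_madd cd_madd)
    hence "z = mzero C A B" using k(2) T by simp
    hence "iden C A = mzero C A A" using wz T A B by simp
    thus ?thesis using lA by (simp add: local_end_def)
  qed
qed

lemma local_non_iso_comp:
  assumes lA: "local_end C A" and lB: "local_end C B" and z: "z \<in> Hom C A B" and nz: "\<not> is_iso C z A B"
    and x: "x \<in> Hom C B D"
  shows "\<not> is_iso C (comp C x z) A D"
proof
  assume "is_iso C (comp C x z) A D"
  then obtain t where t: "t \<in> Hom C D A" "comp C t (comp C x z) = iden C A" by (auto simp: is_iso_def)
  have "comp C (comp C t x) z = iden C A" using t z x by (simp add: Hom_iff)
  moreover have "comp C t x \<in> Hom C B A" using t x by (simp add: Hom_iff)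
  ultimately have "is_iso C z A B" using local_split_mono_iso[OF lA lB z] by blast
  thus False using nz by simp
qed

lemma local_non_iso_madd:
  assumes lA: "local_end C A" and lB: "local_end C B" and f: "f \<in> Hom C A B" and g: "g \<in> Hom C A B"
    and nf: "\<not> is_iso C f A B" and ng: "\<not> is_iso C g A B"
  shows "\<not> is_iso C (madd C f g) A B"
proof
  assume "is_iso C (madd C f g) A B"
  then obtain v where v: "v \<in> Hom C B A" "comp C v (madd C f g) = iden C A" by (auto simp: is_iso_def)
  have A: "A \<in> Ob" and B: "B \<in> Ob" using lA lB by (auto simp: local_end_def)
  have T: "f \<in> Ar" "dm C f = A" "cd C f = B" "g \<in> Ar" "dm C g = A" "cd C g = B" "v \<in> Ar" "dm C v = B" "cd C v = A"
    using f g v by (auto simp: Hom_iff)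
  have s1: "madd C (comp C v f) (comp C v g) = iden C A" using v T by simp
  have vfH: "comp C v f \<in> Hom C A A" and vgH: "comp C v g \<in> Hom C A A" using T by (auto simp: Hom_iff)
  have vH: "v \<in> Hom C B A" using v by simp
  have lem: "\<And>h. h \<in> Hom C A B \<Longrightarrow> is_iso C (comp C v h) A A \<Longrightarrow> is_iso C h A B"
  proof -
    fix h assume h: "h \<in> Hom C A B" and i: "is_iso C (comp C v h) A A"
    then obtain k where k: "k \<in> Hom C A A" "comp C k (comp C v h) = iden C A" by (auto simp: is_iso_def)
    have "comp C (comp C k v) h = iden C A" using k h T by (simp add: Hom_iff)
    moreover have "comp C k v \<in> Hom C B A" using k T by (simp add: Hom_iff)
    ultimately show "is_iso C h A B" using local_split_mono_iso[OF lA lB h] by blast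
  qed
  have "\<not> is_iso C (comp C v f) A A" using lem[OF f] nf by blast
  hence "is_iso C (madd C (iden C A) (mneg C (comp C v f))) A A" using local_end_complement_iso[OF lA vfH] by blast
  moreover have "madd C (iden C A) (mneg C (comp C v f)) = comp C v g"
  proof -
    have "madd C (mneg C (comp C v f)) (madd C (comp C v f) (comp C v g)) = comp C v g" using T by simp
    thus ?thesis unfolding s1 using T A by (simp add: madd_comm)
  qed
  ultimately have "is_iso C g A B" using lem[OF g] by simp
  thus False using ng by simp
qed

end

section \<open>Minimal right approximations in Krull--Schmidt categories\<close>

definition local_decomposition :: "('o,'m,'e,'z) extri_data_scheme \<Rightarrow> 'o \<Rightarrow> nat \<Rightarrow> (nat \<Rightarrow> 'o) \<Rightarrow> (nat \<Rightarrow> 'm) \<Rightarrow> (nat \<Rightarrow> 'm) \<Rightarrow> bool" where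
  "local_decomposition C Y n Xs ij pj \<longleftrightarrow> decomposition C Y n Xs ij pj \<and> (\<forall>k < n. local_end C (Xs k))"

text \<open>Entrywise form of "1 - u lies in the radical": no matrix entry of 1 - u is an isomorphism.\<close>
definition id_mod_radical :: "('o,'m,'e,'z) extri_data_scheme \<Rightarrow> 'o \<Rightarrow> nat \<Rightarrow> (nat \<Rightarrow> 'o) \<Rightarrow> (nat \<Rightarrow> 'm) \<Rightarrow> (nat \<Rightarrow> 'm) \<Rightarrow> 'm \<Rightarrow> bool" where
  "id_mod_radical C Y n Xs ij pj u \<longleftrightarrow> (\<forall>j < n. \<forall>k < n.
     \<not> is_iso C (comp C (pj j) (comp C (madd C (iden C Y) (mneg C u)) (ij k))) (Xs k) (Xs j))"

definition right_approx :: "('o,'m,'e,'z) extri_data_scheme \<Rightarrow> 'o set \<Rightarrow> 'm \<Rightarrow> 'o \<Rightarrow> 'o \<Rightarrow> bool" where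
  "right_approx C Y g Y0 Z \<longleftrightarrow> (\<forall>X' \<in> Y. \<forall>h \<in> Hom C X' Z. \<exists>t \<in> Hom C X' Y0. comp C g t = h)"

text \<open>Right minimality up to split monomorphisms, which is all Wakamatsu's argument uses.\<close>
definition split_minimal :: "('o,'m,'e,'z) extri_data_scheme \<Rightarrow> 'm \<Rightarrow> 'o \<Rightarrow> bool" where
  "split_minimal C g Y0 \<longleftrightarrow>
     (\<forall>\<phi> \<in> Hom C Y0 Y0. comp C g \<phi> = g \<longrightarrow> (\<exists>r \<in> Hom C Y0 Y0. comp C r \<phi> = iden C Y0))"

locale additive_cat = preadditive_cat + assumes additive: "is_additive C"
begin

lemma biprod_exists: "X1 \<in> Ob \<Longrightarrow> X2 \<in> Ob \<Longrightarrow> \<exists>P i1 i2 p1 p2. biprod C X1 X2 P i1 i2 p1 p2"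
  using additive by (simp add: is_additive_def)

lemma zero_obj_exists: "\<exists>Z. zero_obj C Z" using additive by (simp add: is_additive_def)

lemma zero_obj_iden: "zero_obj C Z \<Longrightarrow> iden C Z = mzero C Z Z"
proof -
  assume z: "zero_obj C Z"
  hence "Z \<in> Ob" "Hom C Z Z = {mzero C Z Z}" by (auto simp: zero_obj_def)
  moreover have "iden C Z \<in> Hom C Z Z" using \<open>Z \<in> Ob\<close> by (rule iden_Hom)
  ultimately show ?thesis by auto
qed

lemma decomposition_exists: "(\<And>k. k < n \<Longrightarrow> Xs k \<in> Ob) \<Longrightarrow> \<exists>Y ij pj. decomposition C Y n Xs ij pj"
proof (induction n)
  case 0
  obtain Z where z: "zero_obj C Z" using zero_obj_exists by blast
  hence "Z \<in> Ob" by (simp add: zero_obj_def)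
  hence "decomposition C Z 0 Xs (\<lambda>_. undefined) (\<lambda>_. undefined)" using zero_obj_iden[OF z] by (simp add: decomposition_def)
  thus ?case by blast
next
  case (Suc n)
  then obtain Y ij pj where d: "decomposition C Y n Xs ij pj" by auto
  note D = decompositionD[OF d]
  obtain P i1 i2 p1 p2 where b: "biprod C Y (Xs n) P i1 i2 p1 p2"
    using biprod_exists[of Y "Xs n"] D(1) Suc.prems by auto
  note B = biprodD[OF b]
  define ij' where "ij' k = (if k < n then comp C i1 (ij k) else i2)" for k
  define pj' where "pj' k = (if k < n then comp C (pj k) p1 else p2)" for k
  have T: "\<And>k. k < Suc n \<Longrightarrow> Xs k \<in> Ob \<and> ij' k \<in> Hom C (Xs k) P \<and> pj' k \<in> Hom C P (Xs k)"
    using B D Suc.prems by (auto simp: ij'_def pj'_def Hom_iff less_Suc_eq)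
  have R: "\<And>j k. j < Suc n \<Longrightarrow> k < Suc n \<Longrightarrow> comp C (pj' j) (ij' k) =
      (if j = k then iden C (Xs k) else mzero C (Xs k) (Xs j))"
  proof -
    fix j k assume jk: "j < Suc n" "k < Suc n"
    show "comp C (pj' j) (ij' k) = (if j = k then iden C (Xs k) else mzero C (Xs k) (Xs j))"
    proof (cases "j < n"; cases "k < n")
      assume "j < n" "k < n"
      show ?thesis using B D \<open>j<n\<close> \<open>k<n\<close> by (simp add: ij'_def pj'_def Hom_iff comp_reassoc[OF B(16)])
    next
      assume "j < n" "\<not> k < n"
      hence "k = n" using jk by simp
      show ?thesis using B D \<open>j<n\<close> \<open>k = n\<close> by (simp add: ij'_def pj'_def Hom_iff comp_reassoc[OF B(16)] comp_reassoc[OF B(17)] comp_reassoc[OF B(18)] comp_reassoc[OF B(19)])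
    next
      assume "\<not> j < n" "k < n"
      hence "j = n" using jk by simp
      show ?thesis using B D \<open>k<n\<close> \<open>j = n\<close> by (simp add: ij'_def pj'_def Hom_iff comp_reassoc[OF B(16)] comp_reassoc[OF B(17)] comp_reassoc[OF B(18)] comp_reassoc[OF B(19)])
    next
      assume "\<not> j < n" "\<not> k < n"
      hence "j = n" "k = n" using jk by auto
      thus ?thesis using B by (simp add: ij'_def pj'_def)
    qed
  qed
  have "hsum C P P (\<lambda>k. comp C (ij' k) (pj' k)) n = hsum C P P (\<lambda>k. comp C i1 (comp C (comp C (ij k) (pj k)) p1)) n"
    using B D by (intro hsum_cong) (simp add: ij'_def pj'_def Hom_iff comp_reassoc[OF B(16)] comp_reassoc[OF B(17)] comp_reassoc[OF B(18)] comp_reassoc[OF B(19)])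
  also have "\<dots> = comp C i1 (hsum C P Y (\<lambda>k. comp C (comp C (ij k) (pj k)) p1) n)"
    using B D by (intro comp_hsum_l[symmetric]) (auto simp: Hom_iff)
  also have "hsum C P Y (\<lambda>k. comp C (comp C (ij k) (pj k)) p1) n = comp C (hsum C Y Y (\<lambda>k. comp C (ij k) (pj k)) n) p1"
    using B D by (intro comp_hsum_r[symmetric]) (auto simp: Hom_iff)
  finally have "hsum C P P (\<lambda>k. comp C (ij' k) (pj' k)) n = comp C i1 p1"
    using D B by simp
  hence "hsum C P P (\<lambda>k. comp C (ij' k) (pj' k)) (Suc n) = iden C P"
    using B by (simp add: ij'_def pj'_def)
  hence "decomposition C P (Suc n) Xs ij' pj'" using T R B by (simp add: decomposition_def)
  thus ?case by blast
qed

lemma id_mod_radical_left_inverse: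
  "local_decomposition C Y0 n Xs ij pj \<Longrightarrow> u \<in> Hom C Y0 Y0 \<Longrightarrow> id_mod_radical C Y0 n Xs ij pj u \<Longrightarrow>
    \<exists>L \<in> Hom C Y0 Y0. comp C L u = iden C Y0"
proof (induction n arbitrary: Y0 Xs ij pj u)
  case 0
  have d: "decomposition C Y0 0 Xs ij pj" using 0 by (simp add: local_decomposition_def)
  have Y0: "Y0 \<in> Ob" using decompositionD(1)[OF d] .
  have "iden C Y0 = mzero C Y0 Y0" using decompositionD(6)[OF d] by (metis hsum.simps(1))
  moreover have "comp C (mzero C Y0 Y0) u = mzero C Y0 Y0" using 0 Y0 by (simp add: Hom_iff)
  moreover have "mzero C Y0 Y0 \<in> Hom C Y0 Y0" by (rule mzero_Hom[OF Y0 Y0])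
  ultimately show ?case by metis
next
  case (Suc n)
  have d: "decomposition C Y0 (Suc n) Xs ij pj" and loc: "\<And>k. k < Suc n \<Longrightarrow> local_end C (Xs k)"
    using Suc.prems by (auto simp: local_decomposition_def)
  note D = decompositionD[OF d] and DA = decomposition_arrD[OF d]
  have skn: "\<And>l. l < n \<Longrightarrow> skip_index n l = l" by (simp add: skip_index_def)
  have "\<And>k. k < n \<Longrightarrow> Xs (skip_index n k) \<in> Ob" using D(2) skn by simp
  then obtain Y' e q where d': "decomposition C Y' n (\<lambda>l. Xs (skip_index n l)) e q"
    using decomposition_exists[of n "\<lambda>l. Xs (skip_index n l)"] by blast
  note DA' = decomposition_arrD[OF d']
  have d'': "decomposition C Y' (Suc n - 1) (\<lambda>l. Xs (skip_index n l)) e q" using d' by simp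
  note S = decomposition_split_summand[OF d lessI d'']
  define \<alpha> where "\<alpha> = hsum C Y' Y0 (\<lambda>l. comp C (ij (skip_index n l)) (q l)) (Suc n - 1)"
  define \<beta> where "\<beta> = hsum C Y0 Y' (\<lambda>l. comp C (e l) (pj (skip_index n l))) (Suc n - 1)"
  have b: "biprod C Y' (Xs n) Y0 \<alpha> (ij n) \<beta> (pj n)" using S(1) unfolding \<alpha>_def \<beta>_def .
  have qa: "\<And>l. l < n \<Longrightarrow> comp C (pj l) \<alpha> = q l"
  proof -
    fix l assume l: "l < n"
    show "comp C (pj l) \<alpha> = q l" using S(2)[of l] l skn[OF l] unfolding \<alpha>_def by simp
  qed
  have be: "\<And>l. l < n \<Longrightarrow> comp C \<beta> (ij l) = e l"
  proof -
    fix l assume l: "l < n"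
    show "comp C \<beta> (ij l) = e l" using S(3)[of l] l skn[OF l] unfolding \<beta>_def by simp
  qed
  note B = biprodD[OF b]
  have ldec': "local_decomposition C Y' n (\<lambda>l. Xs (skip_index n l)) e q" using d' loc skn by (simp add: local_decomposition_def)
  have uT: "u \<in> Ar" "dm C u = Y0" "cd C u = Y0" using Suc.prems by (auto simp: Hom_iff)
  have rad: "\<And>j k. j < Suc n \<Longrightarrow> k < Suc n \<Longrightarrow>
     \<not> is_iso C (comp C (pj j) (comp C (madd C (iden C Y0) (mneg C u)) (ij k))) (Xs k) (Xs j)"
    using Suc.prems by (simp add: id_mod_radical_def)
  \<comment> \<open>The corner entry is invertible; the Schur complement M of u with respect to it is the identity modulo the radical on the remaining n summands.\<close>
  let ?a = "comp C (pj n) (comp C u (ij n))"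
  have fH: "comp C (pj n) (comp C (madd C (iden C Y0) (mneg C u)) (ij n)) \<in> Hom C (Xs n) (Xs n)"
    using DA[of n] uT by (simp add: Hom_iff)
  have "is_iso C (madd C (iden C (Xs n)) (mneg C (comp C (pj n) (comp C (madd C (iden C Y0) (mneg C u)) (ij n))))) (Xs n) (Xs n)"
    using local_end_complement_iso[OF loc[of n] fH] rad[of n n] by simp
  moreover have "madd C (iden C (Xs n)) (mneg C (comp C (pj n) (comp C (madd C (iden C Y0) (mneg C u)) (ij n)))) = ?a"
    using DA[of n] uT D(5)[of n n] by simp
  ultimately have "is_iso C ?a (Xs n) (Xs n)" by simp
  then obtain v where v: "v \<in> Hom C (Xs n) (Xs n)" "comp C v ?a = iden C (Xs n)" "comp C ?a v = iden C (Xs n)"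
    by (auto simp: is_iso_def)
  have vT: "v \<in> Ar" "dm C v = Xs n" "cd C v = Xs n" using v by (auto simp: Hom_iff)
  let ?s = "comp C u (ij n)"
  have sH: "?s \<in> Hom C (Xs n) Y0" using uT DA[of n] by (simp add: Hom_iff)
  have vr: "comp C (pj n) (comp C ?s v) = iden C (Xs n)" using v(3) DA[of n] uT vT by simp
  note X = biprod_exchange[OF b sH v(1) v(2) vr]
  define \<beta>' where "\<beta>' = madd C \<beta> (mneg C (comp C \<beta> (comp C ?s (comp C v (pj n)))))"
  have bx: "biprod C Y' (Xs n) Y0 \<alpha> ?s \<beta>' (comp C v (pj n))" using X unfolding \<beta>'_def .
  note BX = biprodD[OF bx]
  define M where "M = comp C \<beta>' (comp C u \<alpha>)"
  have MT: "M \<in> Ar" "dm C M = Y'" "cd C M = Y'" using BX uT unfolding M_def by auto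
  have ab: "comp C \<alpha> \<beta> = madd C (iden C Y0) (mneg C (comp C (ij n) (pj n)))" by (rule biprod_inj_proj_complement[OF b])
  have qb: "\<And>l. l < n \<Longrightarrow> comp C (q l) \<beta> = pj l"
  proof -
    fix l assume l: "l < n"
    have "comp C (q l) \<beta> = comp C (pj l) (comp C \<alpha> \<beta>)" using qa[OF l, symmetric] B DA[of l] l by simp
    also have "\<dots> = pj l" unfolding ab using B DA[of l] DA[of n] l decomposition_proj_inj[OF d, of l n] by (simp add: decomposition_proj_inj_comp[OF d])
    finally show "comp C (q l) \<beta> = pj l" .
  qed
  have ae: "\<And>m. m < n \<Longrightarrow> comp C \<alpha> (e m) = ij m"
  proof -
    fix m assume m: "m < n"
    have "comp C \<alpha> (e m) = comp C (comp C \<alpha> \<beta>) (ij m)" using be[OF m, symmetric] B DA[of m] m by simp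
    also have "\<dots> = ij m" unfolding ab using B DA[of m] DA[of n] m decomposition_proj_inj[OF d, of n m] by (simp add: decomposition_proj_inj_comp[OF d])
    finally show "comp C \<alpha> (e m) = ij m" .
  qed
  have qb2: "\<And>l x. l < n \<Longrightarrow> x \<in> Ar \<Longrightarrow> cd C x = Y0 \<Longrightarrow> comp C (q l) (comp C \<beta> x) = comp C (pj l) x"
  proof -
    fix l x assume l: "l < n" and x: "x \<in> Ar" "cd C x = Y0"
    have "comp C (q l) (comp C \<beta> x) = comp C (comp C (q l) \<beta>) x" using x B DA'[OF l] by simp
    thus "comp C (q l) (comp C \<beta> x) = comp C (pj l) x" using qb[OF l] by simp
  qed
  let ?R = "\<lambda>x y. comp C (pj x) (comp C (madd C (iden C Y0) (mneg C u)) (ij y))"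
  have entry: "\<And>l m. l < n \<Longrightarrow> m < n \<Longrightarrow> comp C (q l) (comp C (madd C (iden C Y') (mneg C M)) (e m))
      = madd C (?R l m) (comp C (?R l n) (comp C v (?R n m)))"
  proof -
    fix l m assume l: "l < n" and m: "m < n"
    have ln: "l \<noteq> n" "m \<noteq> n" using l m by auto
    show "comp C (q l) (comp C (madd C (iden C Y') (mneg C M)) (e m))
      = madd C (?R l m) (comp C (?R l n) (comp C v (?R n m)))"
      unfolding M_def \<beta>'_def
      using B DA[of l] DA[of m] DA[of n] DA'[OF l] DA'[OF m] l m ln uT vT skn[OF l] skn[OF m]
        decomposition_proj_inj_comp[OF d, of l n] decomposition_proj_inj_comp[OF d, of n m] decomposition_proj_inj_comp[OF d, of l m] decomposition_proj_inj[OF d, of l m]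
        decomposition_proj_inj[OF d', of l m] decomposition_proj_inj[OF d, of l n] decomposition_proj_inj[OF d, of n m]
      by (simp add: qb2 ae)
  qed
  have RT: "\<And>x y. x < Suc n \<Longrightarrow> y < Suc n \<Longrightarrow> ?R x y \<in> Hom C (Xs y) (Xs x)"
    using DA uT by (simp add: Hom_iff)
  have radM: "id_mod_radical C Y' n (\<lambda>l. Xs (skip_index n l)) e q M"
    unfolding id_mod_radical_def
  proof (intro allI impI)
    fix l m assume l: "l < n" and m: "m < n"
    have c1: "comp C (?R l n) (comp C v (?R n m)) = comp C (comp C (?R l n) v) (?R n m)"
    proof -
      have r1: "?R l n \<in> Hom C (Xs n) (Xs l)" using RT l by simp
      have r2: "?R n m \<in> Hom C (Xs m) (Xs n)" using RT m by simp
      show ?thesis by (rule comp_assoc[symmetric]) (use r1 r2 vT in \<open>auto simp: Hom_iff\<close>)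
    qed
    have n1: "\<not> is_iso C (comp C (comp C (?R l n) v) (?R n m)) (Xs m) (Xs l)"
      by (rule local_non_iso_comp[OF loc loc RT rad]) (use l m RT[of l n] v in \<open>auto intro: comp_Hom\<close>)
    have "\<not> is_iso C (madd C (?R l m) (comp C (?R l n) (comp C v (?R n m)))) (Xs m) (Xs l)"
      by (rule local_non_iso_madd[OF loc loc RT]) (use l m n1 c1 RT[of l n] RT[of n m] v rad in \<open>auto intro: comp_Hom\<close>)
    thus "\<not> is_iso C (comp C (q l) (comp C (madd C (iden C Y') (mneg C M)) (e m))) (Xs (skip_index n m)) (Xs (skip_index n l))"
      using entry[OF l m] skn[OF l] skn[OF m] by simp
  qed
  have MH: "M \<in> Hom C Y' Y'" using MT by (simp add: Hom_iff)
  obtain L' where L': "L' \<in> Hom C Y' Y'" "comp C L' M = iden C Y'" using Suc.IH[OF ldec' MH radM] by blast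
  show ?case using biprod_left_inverse_by_blocks[OF b _ bx L'(1)] L'(2) Suc.prems(2) unfolding M_def by blast
qed

lemma right_approx_restrict_summand:
  assumes b: "biprod C Y' A Y0 \<alpha> s \<beta> \<pi>" and g: "g \<in> Hom C Y0 Z" and ap: "right_approx C \<Y> g Y0 Z"
    and gs: "comp C g s = mzero C A Z"
  shows "right_approx C \<Y> (comp C g \<alpha>) Y' Z"
  unfolding right_approx_def
proof (intro ballI)
  note B = biprodD[OF b]
  have gT: "g \<in> Ar" "dm C g = Y0" "cd C g = Z" "Z \<in> Ob" using g by (auto simp: Hom_iff)
  fix X' h assume X': "X' \<in> \<Y>" and h: "h \<in> Hom C X' Z"
  obtain t where t: "t \<in> Hom C X' Y0" "comp C g t = h" using ap X' h unfolding right_approx_def by blast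
  have tT: "t \<in> Ar" "dm C t = X'" "cd C t = Y0" using t by (auto simp: Hom_iff)
  have "comp C g t = comp C g (comp C (madd C (comp C \<alpha> \<beta>) (comp C s \<pi>)) t)"
    using B(20) tT gT by simp
  also have "\<dots> = comp C (comp C g \<alpha>) (comp C \<beta> t)"
    using B(1-15) tT gT by (simp add: comp_reassoc[OF gs])
  finally have "comp C (comp C g \<alpha>) (comp C \<beta> t) = h" using t by simp
  moreover have "comp C \<beta> t \<in> Hom C X' Y'" using B tT by (simp add: Hom_iff)
  ultimately show "\<exists>t'\<in>Hom C X' Y'. comp C (comp C g \<alpha>) t' = h" by blast
qed

lemma right_approx_drop_summand:
  assumes cs: "closed_summands C \<Y>" and Z: "Z \<in> Ob"
    and Y0: "Y0 \<in> \<Y>" and g: "g \<in> Hom C Y0 Z" and ap: "right_approx C \<Y> g Y0 Z"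
    and ld: "local_decomposition C Y0 n Xs ij pj"
    and \<phi>: "\<phi> \<in> Hom C Y0 Y0" and g\<phi>: "comp C g \<phi> = g" and nrad: "\<not> id_mod_radical C Y0 n Xs ij pj \<phi>"
  shows "\<exists>Y' g' Xs' ij' pj'. Y' \<in> \<Y> \<and> g' \<in> Hom C Y' Z \<and> right_approx C \<Y> g' Y' Z \<and>
           local_decomposition C Y' (n - 1) Xs' ij' pj'"
proof -
  have d: "decomposition C Y0 n Xs ij pj" and loc: "\<And>k. k < n \<Longrightarrow> local_end C (Xs k)"
    using ld by (auto simp: local_decomposition_def)
  note D = decompositionD[OF d] and DA = decomposition_arrD[OF d]
  have gT: "g \<in> Ar" "dm C g = Y0" "cd C g = Z" using g by (auto simp: Hom_iff)
  have \<phi>T: "\<phi> \<in> Ar" "dm C \<phi> = Y0" "cd C \<phi> = Y0" using \<phi> by (auto simp: Hom_iff)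
  \<comment> \<open>The j-th summand is exchanged for the image of (1 - \<phi>) ij k, which g kills.\<close>
  let ?\<psi> = "madd C (iden C Y0) (mneg C \<phi>)"
  obtain j k where jk: "j < n" "k < n" and iso: "is_iso C (comp C (pj j) (comp C ?\<psi> (ij k))) (Xs k) (Xs j)"
    using nrad unfolding id_mod_radical_def by blast
  have g\<psi>: "comp C g ?\<psi> = mzero C Y0 Z" using gT \<phi>T g\<phi> D(1) by simp
  let ?s = "comp C ?\<psi> (ij k)"
  have sH: "?s \<in> Hom C (Xs k) Y0" using \<phi>T DA[OF jk(2)] by (simp add: Hom_iff)
  have gs: "comp C g ?s = mzero C (Xs k) Z"
  proof -
    have "comp C g ?s = comp C (comp C g ?\<psi>) (ij k)" using \<phi>T gT DA[OF jk(2)] by simp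
    thus ?thesis unfolding g\<psi> using gT DA[OF jk(2)] Z by simp
  qed
  obtain w where w: "w \<in> Hom C (Xs j) (Xs k)" "comp C w (comp C (pj j) ?s) = iden C (Xs k)"
      "comp C (comp C (pj j) ?s) w = iden C (Xs j)"
    using iso by (auto simp: is_iso_def)
  have wT: "w \<in> Ar" "dm C w = Xs j" "cd C w = Xs k" using w by (auto simp: Hom_iff)
  have wr: "comp C (pj j) (comp C ?s w) = iden C (Xs j)"
  proof -
    have "comp C (comp C (pj j) ?s) w = comp C (pj j) (comp C ?s w)"
      by (rule comp_assoc) (use wT DA[OF jk(1)] sH in \<open>auto simp: Hom_iff\<close>)
    thus ?thesis using w(3) by simp
  qed
  have "\<And>l. l < n - 1 \<Longrightarrow> Xs (skip_index j l) \<in> Ob" using D(2) skip_index_less[OF jk(1)] by blast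
  then obtain Y' e q where d': "decomposition C Y' (n - 1) (\<lambda>l. Xs (skip_index j l)) e q"
    using decomposition_exists[of "n - 1" "\<lambda>l. Xs (skip_index j l)"] by blast
  note S = decomposition_split_summand[OF d jk(1) d']
  define \<alpha> where "\<alpha> = hsum C Y' Y0 (\<lambda>l. comp C (ij (skip_index j l)) (q l)) (n - 1)"
  define \<beta> where "\<beta> = hsum C Y0 Y' (\<lambda>l. comp C (e l) (pj (skip_index j l))) (n - 1)"
  have b: "biprod C Y' (Xs j) Y0 \<alpha> (ij j) \<beta> (pj j)" using S(1) unfolding \<alpha>_def \<beta>_def .
  have Y'Y: "Y' \<in> \<Y>" using cs b Y0 unfolding closed_summands_def by blast
  obtain \<beta>' where bx: "biprod C Y' (Xs k) Y0 \<alpha> ?s \<beta>' (comp C w (pj j))"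
    using biprod_exchange[OF b sH w(1) w(2) wr] by blast
  have ld': "local_decomposition C Y' (n - 1) (\<lambda>l. Xs (skip_index j l)) e q"
    using d' loc skip_index_less[OF jk(1)] by (simp add: local_decomposition_def)
  have g'H: "comp C g \<alpha> \<in> Hom C Y' Z" using gT biprodD[OF bx] by (simp add: Hom_iff)
  have ap': "right_approx C \<Y> (comp C g \<alpha>) Y' Z" using right_approx_restrict_summand[OF bx g ap gs] .
  show ?thesis using Y'Y g'H ap' ld' by blast
qed

lemma exists_split_minimal_approx:
  assumes ks: "krull_schmidt C" and cf: "contravariantly_finite C \<Y>" and cs: "closed_summands C \<Y>"
    and YO: "\<Y> \<subseteq> Ob" and Z: "Z \<in> Ob"
  shows "\<exists>Y0\<in>\<Y>. \<exists>g\<in>Hom C Y0 Z. right_approx C \<Y> g Y0 Z \<and> split_minimal C g Y0"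
proof -
  define Good where "Good n \<longleftrightarrow> (\<exists>Y0 g Xs ij pj. Y0 \<in> \<Y> \<and> g \<in> Hom C Y0 Z \<and>
    right_approx C \<Y> g Y0 Z \<and> local_decomposition C Y0 n Xs ij pj)" for n
  obtain Y1 g1 where Y1: "Y1 \<in> \<Y>" "g1 \<in> Hom C Y1 Z" "right_approx C \<Y> g1 Y1 Z"
    using cf Z unfolding contravariantly_finite_def right_approx_def by blast
  have "Y1 \<in> Ob" using Y1 YO by auto
  then obtain n Xs ij pj where KS: "\<forall>k < n. local_end C (Xs k) \<and> ij k \<in> Hom C (Xs k) Y1 \<and> pj k \<in> Hom C Y1 (Xs k)"
     "\<forall>j < n. \<forall>k < n. comp C (pj j) (ij k) = (if j = k then iden C (Xs k) else mzero C (Xs k) (Xs j))"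
     "hsum C Y1 Y1 (\<lambda>k. comp C (ij k) (pj k)) n = iden C Y1"
    using ks unfolding krull_schmidt_def by blast
  have "local_decomposition C Y1 n Xs ij pj"
    using KS \<open>Y1 \<in> Ob\<close> by (auto simp: local_decomposition_def decomposition_def local_end_def)
  hence "Good n" using Y1 unfolding Good_def by blast
  define n0 where "n0 = (LEAST n. Good n)"
  have "Good n0" unfolding n0_def by (rule LeastI[of Good n]) fact
  then obtain Y0 g Xs ij pj where Y0: "Y0 \<in> \<Y>" and g: "g \<in> Hom C Y0 Z" and ap: "right_approx C \<Y> g Y0 Z"
    and ld: "local_decomposition C Y0 n0 Xs ij pj" unfolding Good_def by blast
  have "split_minimal C g Y0" unfolding split_minimal_def
  proof (intro ballI impI)
    fix \<phi> assume \<phi>: "\<phi> \<in> Hom C Y0 Y0" and g\<phi>: "comp C g \<phi> = g"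
    show "\<exists>r\<in>Hom C Y0 Y0. comp C r \<phi> = iden C Y0"
    proof (rule ccontr)
      assume "\<not> ?thesis"
      hence nrad: "\<not> id_mod_radical C Y0 n0 Xs ij pj \<phi>" using id_mod_radical_left_inverse[OF ld \<phi>] by blast
      hence "n0 \<noteq> 0" by (auto simp: id_mod_radical_def)
      moreover have "Good (n0 - 1)"
        using right_approx_drop_summand[OF cs Z Y0 g ap ld \<phi> g\<phi> nrad] unfolding Good_def by blast
      ultimately show False using not_less_Least[of "n0 - 1" Good] unfolding n0_def by simp
    qed
  qed
  thus ?thesis using Y0 g ap by blast
qed

end

section \<open>Extriangulated categories\<close>

locale extri_cat = additive_cat + assumes extriangulated: "extriangulated C"
begin

lemma ET1_C: "ET1 C" using extriangulated by (simp add: extriangulated_def)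

lemma Ext_objs: "d \<in> Ext C Z X \<Longrightarrow> Z \<in> Ob \<and> X \<in> Ob"
  using ET1_C by (auto simp: ET1_def Ext_def)

lemma Ext_group: "Z \<in> Ob \<Longrightarrow> X \<in> Ob \<Longrightarrow>
        ezero C Z X \<in> Ext C Z X \<and>
        (\<forall>d \<in> Ext C Z X. eneg C d \<in> Ext C Z X) \<and>
        (\<forall>d \<in> Ext C Z X. \<forall>d' \<in> Ext C Z X. \<forall>d'' \<in> Ext C Z X.
            eadd C (eadd C d d') d'' = eadd C d (eadd C d' d'')) \<and>
        (\<forall>d \<in> Ext C Z X. eadd C (ezero C Z X) d = d) \<and>
        (\<forall>d \<in> Ext C Z X. eadd C (eneg C d) d = ezero C Z X)"
  using ET1_C unfolding ET1_def by (elim conjE) (intro conjI; blast)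

lemma ezero_Ext: "Z \<in> Ob \<Longrightarrow> X \<in> Ob \<Longrightarrow> ezero C Z X \<in> Ext C Z X" using Ext_group by blast
lemma eneg_Ext: "d \<in> Ext C Z X \<Longrightarrow> eneg C d \<in> Ext C Z X" using Ext_group Ext_objs by blast
lemma eadd_assoc: "d \<in> Ext C Z X \<Longrightarrow> d' \<in> Ext C Z X \<Longrightarrow> d'' \<in> Ext C Z X \<Longrightarrow>
   eadd C (eadd C d d') d'' = eadd C d (eadd C d' d'')" using Ext_group Ext_objs by blast
lemma ezero_eadd: "d \<in> Ext C Z X \<Longrightarrow> eadd C (ezero C Z X) d = d" using Ext_group Ext_objs by blast
lemma eneg_eadd: "d \<in> Ext C Z X \<Longrightarrow> eadd C (eneg C d) d = ezero C Z X" using Ext_group Ext_objs by blast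

lemma pullb_Ext: "c \<in> Hom C Z' Z \<Longrightarrow> d \<in> Ext C Z X \<Longrightarrow> pullb C c d \<in> Ext C Z' X"
  using ET1_C unfolding ET1_def by (elim conjE) meson
lemma pushf_Ext: "a \<in> Hom C X X' \<Longrightarrow> d \<in> Ext C Z X \<Longrightarrow> pushf C a d \<in> Ext C Z X'"
  using ET1_C unfolding ET1_def by (elim conjE) meson
lemma pullb_eadd: "c \<in> Hom C Z' Z \<Longrightarrow> d \<in> Ext C Z X \<Longrightarrow> d' \<in> Ext C Z X \<Longrightarrow>
   pullb C c (eadd C d d') = eadd C (pullb C c d) (pullb C c d')"
  using ET1_C unfolding ET1_def by (elim conjE) meson
lemma pushf_eadd: "a \<in> Hom C X X' \<Longrightarrow> d \<in> Ext C Z X \<Longrightarrow> d' \<in> Ext C Z X \<Longrightarrow>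
   pushf C a (eadd C d d') = eadd C (pushf C a d) (pushf C a d')"
  using ET1_C unfolding ET1_def by (elim conjE) meson
lemma pullb_id: "d \<in> Ext C Z X \<Longrightarrow> pullb C (iden C Z) d = d"
  using ET1_C unfolding ET1_def by (elim conjE) meson
lemma pushf_id: "d \<in> Ext C Z X \<Longrightarrow> pushf C (iden C X) d = d"
  using ET1_C unfolding ET1_def by (elim conjE) meson
lemma pullb_comp: "c \<in> Hom C Z' Z \<Longrightarrow> c' \<in> Hom C Z'' Z' \<Longrightarrow> d \<in> Ext C Z X \<Longrightarrow>
   pullb C (comp C c c') d = pullb C c' (pullb C c d)"
  using ET1_C unfolding ET1_def by (elim conjE) meson
lemma pushf_comp: "a \<in> Hom C X X' \<Longrightarrow> a' \<in> Hom C X' X'' \<Longrightarrow> d \<in> Ext C Z X \<Longrightarrow>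
   pushf C (comp C a' a) d = pushf C a' (pushf C a d)"
  using ET1_C unfolding ET1_def by (elim conjE) meson
lemma pushf_pullb: "a \<in> Hom C X X' \<Longrightarrow> c \<in> Hom C Z' Z \<Longrightarrow> d \<in> Ext C Z X \<Longrightarrow>
   pushf C a (pullb C c d) = pullb C c (pushf C a d)"
  using ET1_C unfolding ET1_def by (elim conjE) meson
lemma pushf_madd: "a \<in> Hom C X X' \<Longrightarrow> a' \<in> Hom C X X' \<Longrightarrow> d \<in> Ext C Z X \<Longrightarrow>
   pushf C (madd C a a') d = eadd C (pushf C a d) (pushf C a' d)"
  using ET1_C unfolding ET1_def by (elim conjE) meson

lemma eadd_idem_zero: "p \<in> Ext C Z X \<Longrightarrow> eadd C p p = p \<Longrightarrow> p = ezero C Z X"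
proof -
  assume p: "p \<in> Ext C Z X" and pp: "eadd C p p = p"
  have "eadd C (eneg C p) (eadd C p p) = eadd C (eneg C p) p" using pp by simp
  hence "eadd C (eadd C (eneg C p) p) p = ezero C Z X"
    using eadd_assoc[OF eneg_Ext[OF p] p p] eneg_eadd[OF p] by simp
  thus ?thesis using eneg_eadd[OF p] ezero_eadd[OF p] by simp
qed

lemma pullb_ezero: "c \<in> Hom C Z' Z \<Longrightarrow> X \<in> Ob \<Longrightarrow> pullb C c (ezero C Z X) = ezero C Z' X"
proof -
  assume c: "c \<in> Hom C Z' Z" and X: "X \<in> Ob"
  have Z: "Z \<in> Ob" "Z' \<in> Ob" using c Hom_objs by auto
  have z: "ezero C Z X \<in> Ext C Z X" using ezero_Ext Z X by blast
  have "pullb C c (eadd C (ezero C Z X) (ezero C Z X)) = eadd C (pullb C c (ezero C Z X)) (pullb C c (ezero C Z X))"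
    using pullb_eadd[OF c z z] .
  hence "eadd C (pullb C c (ezero C Z X)) (pullb C c (ezero C Z X)) = pullb C c (ezero C Z X)"
    using ezero_eadd[OF z] by simp
  thus ?thesis using eadd_idem_zero pullb_Ext[OF c z] by blast
qed

lemma pushf_ezero: "a \<in> Hom C X X' \<Longrightarrow> Z \<in> Ob \<Longrightarrow> pushf C a (ezero C Z X) = ezero C Z X'"
proof -
  assume a: "a \<in> Hom C X X'" and Z: "Z \<in> Ob"
  have X: "X \<in> Ob" "X' \<in> Ob" using a Hom_objs by auto
  have z: "ezero C Z X \<in> Ext C Z X" using ezero_Ext Z X by blast
  have "pushf C a (eadd C (ezero C Z X) (ezero C Z X)) = eadd C (pushf C a (ezero C Z X)) (pushf C a (ezero C Z X))"
    using pushf_eadd[OF a z z] .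
  hence "eadd C (pushf C a (ezero C Z X)) (pushf C a (ezero C Z X)) = pushf C a (ezero C Z X)"
    using ezero_eadd[OF z] by simp
  thus ?thesis using eadd_idem_zero pushf_Ext[OF a z] by blast
qed

lemma pushf_mzero: "X \<in> Ob \<Longrightarrow> X' \<in> Ob \<Longrightarrow> d \<in> Ext C Z X \<Longrightarrow> pushf C (mzero C X X') d = ezero C Z X'"
proof -
  assume X: "X \<in> Ob" "X' \<in> Ob" and d: "d \<in> Ext C Z X"
  have zH: "mzero C X X' \<in> Hom C X X'" using mzero_Hom X by blast
  have "pushf C (madd C (mzero C X X') (mzero C X X')) d = eadd C (pushf C (mzero C X X') d) (pushf C (mzero C X X') d)"
    using pushf_madd[OF zH zH d] .
  hence "eadd C (pushf C (mzero C X X') d) (pushf C (mzero C X X') d) = pushf C (mzero C X X') d"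
    using X by simp
  thus ?thesis using eadd_idem_zero pushf_Ext[OF zH d] by blast
qed

lemma realization: "is_realization C"
  using extriangulated by (simp add: extriangulated_def ET2_def)

lemma realization_class: "Z \<in> Ob \<Longrightarrow> A \<in> Ob \<Longrightarrow> d \<in> Ext C Z A \<Longrightarrow>
        (\<exists>x y. realizes C d x y) \<and>
        (\<forall>x y. realizes C d x y \<longrightarrow> (\<exists>B. x \<in> Hom C A B \<and> y \<in> Hom C B Z)) \<and>
        (\<forall>x y x' y'. realizes C d x y \<longrightarrow> realizes C d x' y' \<longrightarrow> seq_equiv C x y x' y')"
  using realization unfolding is_realization_def by (elim conjE) blast

lemma etri_exists: "d \<in> Ext C Z A \<Longrightarrow> \<exists>x y B. etri C x y d A B Z"
  using realization_class Ext_objs unfolding etri_def by blast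

lemma realizes_seq_equiv: "d \<in> Ext C Z A \<Longrightarrow> realizes C d x y \<Longrightarrow> realizes C d x' y' \<Longrightarrow>
   seq_equiv C x y x' y'"
  using realization_class Ext_objs by blast

lemma etri_morphism_R1: "etri C x y d A B Z \<Longrightarrow> etri C x' y' d' A' B' Z' \<Longrightarrow>
   a \<in> Hom C A A' \<Longrightarrow> c \<in> Hom C Z Z' \<Longrightarrow> pushf C a d = pullb C c d' \<Longrightarrow>
   \<exists>b \<in> Hom C B B'. comp C b x = comp C x' a \<and> comp C y' b = comp C c y"
  using realization unfolding is_realization_def by (elim conjE) meson

lemma etri_morphism_ET3: "etri C x y d A B Z \<Longrightarrow> etri C x' y' d' A' B' Z' \<Longrightarrow>
   a \<in> Hom C A A' \<Longrightarrow> b \<in> Hom C B B' \<Longrightarrow> comp C b x = comp C x' a \<Longrightarrow>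
   \<exists>c \<in> Hom C Z Z'. comp C c y = comp C y' b \<and> pushf C a d = pullb C c d'"
  using extriangulated unfolding extriangulated_def ET3_def by blast

lemma etriD: "etri C x y d A B Z \<Longrightarrow> d \<in> Ext C Z A \<and> x \<in> Hom C A B \<and> y \<in> Hom C B Z \<and> realizes C d x y
   \<and> A \<in> Ob \<and> B \<in> Ob \<and> Z \<in> Ob"
  by (auto simp: etri_def Hom_iff)

lemma split_etri_exists: "Z \<in> Ob \<Longrightarrow> A \<in> Ob \<Longrightarrow> \<exists>P i1 i2 p1 p2. biprod C A Z P i1 i2 p1 p2 \<and> etri C i1 p2 (ezero C Z A) A P Z"
proof -
  assume o: "Z \<in> Ob" "A \<in> Ob"
  obtain P i1 i2 p1 p2 where b: "biprod C A Z P i1 i2 p1 p2" and r: "realizes C (ezero C Z A) i1 p2"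
    using extriangulated o unfolding extriangulated_def ET2_def by (elim conjE) meson
  have "etri C i1 p2 (ezero C Z A) A P Z" using b r ezero_Ext[OF o] by (auto simp: etri_def biprod_def)
  thus ?thesis using b by blast
qed

lemma factor_through_inflation: "etri C x y d A B Z \<Longrightarrow> f \<in> Hom C A X \<Longrightarrow> pushf C f d = ezero C Z X \<Longrightarrow>
   \<exists>k \<in> Hom C B X. comp C k x = f"
proof -
  assume t: "etri C x y d A B Z" and f: "f \<in> Hom C A X" and z: "pushf C f d = ezero C Z X"
  note T = etriD[OF t]
  have X: "X \<in> Ob" using f Hom_objs by blast
  obtain P i1 i2 p1 p2 where b: "biprod C X Z P i1 i2 p1 p2" and st: "etri C i1 p2 (ezero C Z X) X P Z"
    using split_etri_exists[of Z X] T X by blast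
  note B = biprodD[OF b]
  have "pullb C (iden C Z) (ezero C Z X) = ezero C Z X" using pullb_id ezero_Ext T X by blast
  hence "pushf C f d = pullb C (iden C Z) (ezero C Z X)" using z by simp
  then obtain bb where bb: "bb \<in> Hom C B P" "comp C bb x = comp C i1 f"
    using etri_morphism_R1[OF t st f iden_Hom] T by blast
  have "comp C (comp C p1 bb) x = f" using bb B T f by (auto simp: Hom_iff comp_reassoc[OF B(16)])
  moreover have "comp C p1 bb \<in> Hom C B X" using bb B by (auto simp: Hom_iff)
  ultimately show ?thesis by blast
qed

lemma pushf_inflation_zero: "etri C x y d A B Z \<Longrightarrow> pushf C x d = ezero C Z B"
proof -
  assume t: "etri C x y d A B Z"
  note T = etriD[OF t]
  obtain P i1 i2 p1 p2 where b: "biprod C B Z P i1 i2 p1 p2" and st: "etri C i1 p2 (ezero C Z B) B P Z"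
    using split_etri_exists[of Z B] T by blast
  note B = biprodD[OF b]
  have i1H: "i1 \<in> Hom C B P" using B by (simp add: Hom_iff)
  obtain c where c: "c \<in> Hom C Z Z" "pushf C x d = pullb C c (ezero C Z B)"
    using etri_morphism_ET3[OF t st _ i1H] T by blast
  thus ?thesis using pullb_ezero T by simp
qed

lemma split_etri_section: "etri C x y (ezero C Z A) A B Z \<Longrightarrow> \<exists>s \<in> Hom C Z B. comp C y s = iden C Z"
proof -
  assume t: "etri C x y (ezero C Z A) A B Z"
  note T = etriD[OF t]
  obtain P i1 i2 p1 p2 where b: "biprod C A Z P i1 i2 p1 p2" and st: "etri C i1 p2 (ezero C Z A) A P Z"
    using split_etri_exists[of Z A] T by blast
  note B = biprodD[OF b]
  have "seq_equiv C i1 p2 x y" using realizes_seq_equiv T etriD[OF st] by blast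
  then obtain bb where bb: "is_iso C bb (cd C i1) (cd C x)" "comp C bb i1 = x" "comp C y bb = p2"
    unfolding seq_equiv_def by blast
  have bbH: "bb \<in> Hom C P B" using bb(1) B T by (auto simp: is_iso_def Hom_iff)
  have "comp C y (comp C bb i2) = iden C Z"
  proof -
    have "comp C y (comp C bb i2) = comp C (comp C y bb) i2" using bbH B T by (simp add: Hom_iff)
    thus ?thesis using bb(3) B by simp
  qed
  moreover have "comp C bb i2 \<in> Hom C Z B" using bbH B by (auto simp: Hom_iff)
  ultimately show ?thesis by blast
qed

lemma pushf_deflation_zero_factor: "etri C a b d' M E Y0 \<Longrightarrow> e \<in> Ext C V E \<Longrightarrow> pushf C b e = ezero C V Y0 \<Longrightarrow>
   \<exists>e'' \<in> Ext C V M. e = pushf C a e''"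
proof -
  assume t: "etri C a b d' M E Y0" and e: "e \<in> Ext C V E" and z: "pushf C b e = ezero C V Y0"
  note T = etriD[OF t]
  obtain v1 v2 W where te: "etri C v1 v2 e E W V" using etri_exists[OF e] by blast
  note TE = etriD[OF te]
  obtain E2 h h' d'' dd ee where
    A: "etri C h h' d'' M W E2" "dd \<in> Hom C Y0 E2" "ee \<in> Hom C E2 V"
       "etri C dd ee (pushf C b e) Y0 E2 V" "pushf C a d'' = pullb C ee e"
  proof -
    have "\<exists>E2 h h' d'' dd ee.
           etri C h h' d'' M W E2 \<and> dd \<in> Hom C Y0 E2 \<and> ee \<in> Hom C E2 V \<and>
           h = comp C v1 a \<and> comp C h' v1 = comp C dd b \<and> comp C ee h' = v2 \<and>
           etri C dd ee (pushf C b e) Y0 E2 V \<and>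
           pullb C dd d'' = d' \<and> pushf C a d'' = pullb C ee e"
      using extriangulated unfolding extriangulated_def ET4_def using t te by blast
    thus ?thesis using that by blast
  qed
  have "etri C dd ee (ezero C V Y0) Y0 E2 V" using A(4) z by simp
  then obtain s where s: "s \<in> Hom C V E2" "comp C ee s = iden C V" using split_etri_section by blast
  have d'': "d'' \<in> Ext C E2 M" using etriD[OF A(1)] by blast
  have "e = pullb C (iden C V) e" using pullb_id[OF e] by simp
  also have "\<dots> = pullb C (comp C ee s) e" using s by simp
  also have "\<dots> = pullb C s (pullb C ee e)" using pullb_comp[OF A(3) s(1) e] .
  also have "\<dots> = pullb C s (pushf C a d'')" using A(5) by simp
  also have "\<dots> = pushf C a (pullb C s d'')" proof -
    have aH: "a \<in> Hom C M E" using T by blast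
    show ?thesis using pushf_pullb[OF aH s(1) d''] by simp
  qed
  finally have "e = pushf C a (pullb C s d'')" .
  moreover have "pullb C s d'' \<in> Ext C V M" using pullb_Ext[OF s(1) d''] .
  ultimately show ?thesis by blast
qed

section \<open>The right perpendicular category\<close>

lemma rperp1_Ext_zero: "X \<in> rperp1 C \<Y> \<Longrightarrow> V \<in> \<Y> \<Longrightarrow> d \<in> Ext C V X \<Longrightarrow> d = ezero C V X"
  unfolding rperp1_def by auto

lemma rperp1I: "X \<in> Ob \<Longrightarrow> \<Y> \<subseteq> Ob \<Longrightarrow> (\<And>V d. V \<in> \<Y> \<Longrightarrow> d \<in> Ext C V X \<Longrightarrow> d = ezero C V X) \<Longrightarrow>
   X \<in> rperp1 C \<Y>"
  unfolding rperp1_def using ezero_Ext by blast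

lemma rperp1_retract:
  assumes YO: "\<Y> \<subseteq> Ob" and P: "P \<in> rperp1 C \<Y>" and i: "i \<in> Hom C X P" and p: "p \<in> Hom C P X"
    and pi: "comp C p i = iden C X"
  shows "X \<in> rperp1 C \<Y>"
proof (rule rperp1I[OF _ YO])
  show "X \<in> Ob" using i Hom_objs by blast
  fix V e assume V: "V \<in> \<Y>" and e: "e \<in> Ext C V X"
  have ie: "pushf C i e = ezero C V P" using rperp1_Ext_zero[OF P V pushf_Ext[OF i e]] .
  have "e = pushf C (comp C p i) e" using pushf_id[OF e] pi by simp
  also have "\<dots> = pushf C p (pushf C i e)" using pushf_comp[OF i p e] .
  also have "\<dots> = ezero C V X" using ie pushf_ezero[OF p] V YO by auto
  finally show "e = ezero C V X" .
qed

lemma rperp1_closed_summands: "\<Y> \<subseteq> Ob \<Longrightarrow> closed_summands C (rperp1 C \<Y>)"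
  unfolding closed_summands_def
proof (intro allI impI)
  fix X1 X2 P i1 i2 p1 p2 assume YO: "\<Y> \<subseteq> Ob" and b: "biprod C X1 X2 P i1 i2 p1 p2" and P: "P \<in> rperp1 C \<Y>"
  note B = biprodD[OF b]
  have H: "i1 \<in> Hom C X1 P" "i2 \<in> Hom C X2 P" "p1 \<in> Hom C P X1" "p2 \<in> Hom C P X2"
    using B by (auto simp: Hom_iff)
  show "X1 \<in> rperp1 C \<Y> \<and> X2 \<in> rperp1 C \<Y>"
    using rperp1_retract[OF YO P H(1) H(3) B(16)] rperp1_retract[OF YO P H(2) H(4) B(17)] by blast
qed

lemma rperp1_closed_iso: "\<Y> \<subseteq> Ob \<Longrightarrow> X \<in> rperp1 C \<Y> \<Longrightarrow> is_iso C f X Y \<Longrightarrow> Y \<in> rperp1 C \<Y>"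
  unfolding is_iso_def using rperp1_retract by blast

lemma rperp1_zero_obj: "\<Y> \<subseteq> Ob \<Longrightarrow> zero_obj C Z \<Longrightarrow> Z \<in> rperp1 C \<Y>"
proof -
  assume YO: "\<Y> \<subseteq> Ob" and z: "zero_obj C Z"
  have Z: "Z \<in> Ob" using z by (simp add: zero_obj_def)
  show ?thesis
  proof (rule rperp1I[OF Z YO])
    fix V e assume e: "e \<in> Ext C V Z"
    have "e = pushf C (mzero C Z Z) e" using pushf_id[OF e] zero_obj_iden[OF z] by simp
    also have "\<dots> = ezero C V Z" using pushf_mzero[OF Z Z e] .
    finally show "e = ezero C V Z" .
  qed
qed

lemma rperp1_closed_biprod:
  assumes YO: "\<Y> \<subseteq> Ob" and X1: "X1 \<in> rperp1 C \<Y>" and X2: "X2 \<in> rperp1 C \<Y>"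
    and b: "biprod C X1 X2 P i1 i2 p1 p2"
  shows "P \<in> rperp1 C \<Y>"
proof -
  note B = biprodD[OF b]
  have H: "i1 \<in> Hom C X1 P" "i2 \<in> Hom C X2 P" "p1 \<in> Hom C P X1" "p2 \<in> Hom C P X2"
    using B by (auto simp: Hom_iff)
  show ?thesis
  proof (rule rperp1I[OF B(3) YO])
    fix V e assume V: "V \<in> \<Y>" and e: "e \<in> Ext C V P"
    have VO: "V \<in> Ob" using V YO by auto
    have z1: "pushf C p1 e = ezero C V X1" using rperp1_Ext_zero[OF X1 V pushf_Ext[OF H(3) e]] .
    have z2: "pushf C p2 e = ezero C V X2" using rperp1_Ext_zero[OF X2 V pushf_Ext[OF H(4) e]] .
    have c: "comp C i1 p1 \<in> Hom C P P" "comp C i2 p2 \<in> Hom C P P" using B by (auto simp: Hom_iff)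
    have "e = pushf C (madd C (comp C i1 p1) (comp C i2 p2)) e" using pushf_id[OF e] B(20) by simp
    also have "\<dots> = eadd C (pushf C i1 (pushf C p1 e)) (pushf C i2 (pushf C p2 e))"
      using pushf_madd[OF c e] pushf_comp[OF H(3) H(1) e] pushf_comp[OF H(4) H(2) e] by simp
    also have "\<dots> = ezero C V P"
      using z1 z2 pushf_ezero[OF H(1) VO] pushf_ezero[OF H(2) VO] ezero_eadd ezero_Ext VO B(3) by simp
    finally show "e = ezero C V P" .
  qed
qed

lemma rperp1_subcat: "\<Y> \<subseteq> Ob \<Longrightarrow> subcat C (rperp1 C \<Y>)"
proof -
  assume YO: "\<Y> \<subseteq> Ob"
  obtain Z where "zero_obj C Z" using zero_obj_exists by blast
  hence "\<exists>Z \<in> rperp1 C \<Y>. zero_obj C Z" using rperp1_zero_obj[OF YO] by blast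
  moreover have "rperp1 C \<Y> \<subseteq> Ob" unfolding rperp1_def by blast
  ultimately show ?thesis
    unfolding subcat_def using rperp1_closed_iso[OF YO] rperp1_closed_biprod[OF YO] by blast
qed

lemma rperp1_closed_ext: "\<Y> \<subseteq> Ob \<Longrightarrow> closed_ext C (rperp1 C \<Y>)"
  unfolding closed_ext_def
proof (intro allI impI)
  fix x y d A B Z
  assume YO: "\<Y> \<subseteq> Ob" and t: "etri C x y d A B Z" and A: "A \<in> rperp1 C \<Y>" and Z: "Z \<in> rperp1 C \<Y>"
  note T = etriD[OF t]
  show "B \<in> rperp1 C \<Y>"
  proof (rule rperp1I[OF _ YO])
    show "B \<in> Ob" using T by blast
    fix V e assume V: "V \<in> \<Y>" and e: "e \<in> Ext C V B"
    have "pushf C y e = ezero C V Z" using rperp1_Ext_zero[OF Z V pushf_Ext[OF _ e]] T by blast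
    then obtain e'' where e'': "e'' \<in> Ext C V A" "e = pushf C x e''"
      using pushf_deflation_zero_factor[OF t e] by blast
    have "e'' = ezero C V A" using rperp1_Ext_zero[OF A V e''(1)] .
    thus "e = ezero C V B" using e''(2) pushf_ezero T V YO by auto
  qed
qed

lemma injective_Ext_zero: "injective C I \<Longrightarrow> d \<in> Ext C V I \<Longrightarrow> d = ezero C V I"
  unfolding injective_def using Ext_objs by blast

lemma split_minimal_approx_pushf_zero:
  assumes ce: "closed_ext C \<Y>" and Y0: "Y0 \<in> \<Y>" and g: "g \<in> Hom C Y0 Z"
    and ap: "right_approx C \<Y> g Y0 Z" and mn: "split_minimal C g Y0"
    and V: "V \<in> \<Y>" and u: "u \<in> Ext C V Y0" and gu: "pushf C g u = ezero C V Z"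
  shows "u = ezero C V Y0"
proof -
  obtain i w W where tu: "etri C i w u Y0 W V" using etri_exists[OF u] by blast
  have iH: "i \<in> Hom C Y0 W" using etriD[OF tu] by blast
  have WY: "W \<in> \<Y>" using ce tu Y0 V unfolding closed_ext_def by blast
  obtain k where k: "k \<in> Hom C W Z" "comp C k i = g" using factor_through_inflation[OF tu g gu] by blast
  obtain h where h: "h \<in> Hom C W Y0" "comp C g h = k" using ap WY k(1) unfolding right_approx_def by blast
  have "comp C g (comp C h i) = comp C (comp C g h) i" using g h(1) iH by (simp add: Hom_iff)
  hence "comp C g (comp C h i) = g" using h(2) k(2) by simp
  moreover have "comp C h i \<in> Hom C Y0 Y0" using h iH by (auto simp: Hom_iff)
  ultimately obtain r where r: "r \<in> Hom C Y0 Y0" "comp C r (comp C h i) = iden C Y0"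
    using mn unfolding split_minimal_def by blast
  have rh: "comp C r h \<in> Hom C W Y0" using r h by (auto simp: Hom_iff)
  have "u = pushf C (comp C (comp C r h) i) u" using pushf_id[OF u] r h(1) iH by (simp add: Hom_iff)
  also have "\<dots> = pushf C (comp C r h) (pushf C i u)" using pushf_comp[OF iH rh u] .
  also have "\<dots> = ezero C V Y0" using pushf_inflation_zero[OF tu] pushf_ezero[OF rh] Ext_objs[OF u] by simp
  finally show ?thesis .
qed

lemma pullback_along_approx_rperp1:
  assumes ce: "closed_ext C \<Y>" and YO: "\<Y> \<subseteq> Ob"
    and t: "etri C x y d M I Z" and inj: "injective C I"
    and Y0: "Y0 \<in> \<Y>" and g: "g \<in> Hom C Y0 Z" and ap: "right_approx C \<Y> g Y0 Z" and mn: "split_minimal C g Y0"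
    and t': "etri C a b (pullb C g d) M E Y0"
  shows "E \<in> rperp1 C \<Y>"
proof (rule rperp1I[OF _ YO])
  note T = etriD[OF t] and T' = etriD[OF t']
  have xH: "x \<in> Hom C M I" and yH: "y \<in> Hom C I Z" and dE: "d \<in> Ext C Z M" and M: "M \<in> Ob"
    and aH: "a \<in> Hom C M E" and bH: "b \<in> Hom C E Y0" and d'E: "pullb C g d \<in> Ext C Y0 M"
    using T T' by auto
  show "E \<in> Ob" using T' by blast
  have "pushf C (iden C M) (pullb C g d) = pullb C g d" using pushf_id[OF d'E] .
  then obtain \<beta> where \<beta>: "\<beta> \<in> Hom C E I" "comp C y \<beta> = comp C g b"
    using etri_morphism_R1[OF t' t iden_Hom[OF M] g] by blast
  fix V e assume V: "V \<in> \<Y>" and e: "e \<in> Ext C V E"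
  have VO: "V \<in> Ob" using V YO by auto
  have "pushf C g (pushf C b e) = pushf C y (pushf C \<beta> e)"
    using pushf_comp[OF bH g e] pushf_comp[OF \<beta>(1) yH e] \<beta>(2) by simp
  also have "\<dots> = ezero C V Z"
    using injective_Ext_zero[OF inj pushf_Ext[OF \<beta>(1) e]] pushf_ezero[OF yH VO] by simp
  finally have "pushf C b e = ezero C V Y0"
    using split_minimal_approx_pushf_zero[OF ce Y0 g ap mn V pushf_Ext[OF bH e]] by blast
  then obtain e'' where e'': "e'' \<in> Ext C V M" "e = pushf C a e''"
    using pushf_deflation_zero_factor[OF t' e] by blast
  \<comment> \<open>As I is injective, e'' is a pullback of d; the map V \<rightarrow> Z along which it is pulled back factors through g.\<close>
  obtain r1 r2 U where tr: "etri C r1 r2 e'' M U V" using etri_exists[OF e''(1)] by blast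
  have "pushf C x e'' = ezero C V I" using injective_Ext_zero[OF inj pushf_Ext[OF xH e''(1)]] .
  then obtain s where s: "s \<in> Hom C U I" "comp C s r1 = x" using factor_through_inflation[OF tr xH] by blast
  have "comp C s r1 = comp C x (iden C M)" using s xH by (simp add: Hom_iff)
  then obtain c where c: "c \<in> Hom C V Z" "pushf C (iden C M) e'' = pullb C c d"
    using etri_morphism_ET3[OF tr t iden_Hom[OF M] s(1)] by blast
  obtain c' where c': "c' \<in> Hom C V Y0" "comp C g c' = c" using ap V c(1) unfolding right_approx_def by blast
  have "e = pushf C a (pullb C c' (pullb C g d))"
    using e''(2) c(2) pushf_id[OF e''(1)] pullb_comp[OF g c'(1) dE] c'(2) by simp
  also have "\<dots> = pullb C c' (pushf C a (pullb C g d))" using pushf_pullb[OF aH c'(1) d'E] .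
  also have "\<dots> = ezero C V E" using pushf_inflation_zero[OF t'] pullb_ezero[OF c'(1)] T' by simp
  finally show "e = ezero C V E" .
qed

lemma rperp1_covariantly_finite:
  assumes ks: "krull_schmidt C" and cf: "contravariantly_finite C \<Y>" and cs: "closed_summands C \<Y>"
    and ce: "closed_ext C \<Y>" and YO: "\<Y> \<subseteq> Ob" and ei: "enough_injectives C"
  shows "covariantly_finite C (rperp1 C \<Y>)"
  unfolding covariantly_finite_def
proof (intro ballI)
  fix M assume M: "M \<in> Ob"
  obtain x y d I Z where t: "etri C x y d M I Z" and inj: "injective C I"
    using ei M unfolding enough_injectives_def by blast
  have dE: "d \<in> Ext C Z M" and Z: "Z \<in> Ob" using etriD[OF t] by auto
  obtain Y0 g where Y0: "Y0 \<in> \<Y>" and g: "g \<in> Hom C Y0 Z" and ap: "right_approx C \<Y> g Y0 Z"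
    and mn: "split_minimal C g Y0"
    using exists_split_minimal_approx[OF ks cf cs YO Z] by blast
  have d'E: "pullb C g d \<in> Ext C Y0 M" using pullb_Ext[OF g dE] .
  obtain a b E where t': "etri C a b (pullb C g d) M E Y0" using etri_exists[OF d'E] by blast
  have "E \<in> rperp1 C \<Y>" using pullback_along_approx_rperp1[OF ce YO t inj Y0 g ap mn t'] .
  moreover have "a \<in> Hom C M E" using etriD[OF t'] by blast
  moreover have "\<exists>k\<in>Hom C E X'. comp C k a = f" if X': "X' \<in> rperp1 C \<Y>" and f: "f \<in> Hom C M X'" for X' f
    using factor_through_inflation[OF t' f] rperp1_Ext_zero[OF X' Y0 pushf_Ext[OF f d'E]] by blast
  ultimately show "\<exists>X\<in>rperp1 C \<Y>. \<exists>f\<in>Hom C M X. \<forall>X'\<in>rperp1 C \<Y>. \<forall>g\<in>Hom C M X'. \<exists>h\<in>Hom C X X'. comp C h f = g"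
    by blast
qed

end

theorem lemma3p2:
  fixes C :: "('o, 'm, 'e) extri_data" and \<Y> :: "'o set"
  assumes "extriangulated C"
    and "krull_schmidt C"
    and "enough_projectives C"
    and "enough_injectives C"
    and "subcat C \<Y>"
    and "contravariantly_finite C \<Y>"
    and "closed_ext C \<Y>"
    and "closed_summands C \<Y>"
  shows "subcat C (rperp1 C \<Y>) \<and> covariantly_finite C (rperp1 C \<Y>) \<and>
         closed_ext C (rperp1 C \<Y>) \<and> closed_summands C (rperp1 C \<Y>)"
proof -
  interpret extri_cat C
    using assms(1) by unfold_locales (auto simp: extriangulated_def is_additive_def)
  have YO: "\<Y> \<subseteq> obj C" using assms(5) by (simp add: subcat_def)
  show ?thesis
    using rperp1_subcat[OF YO] rperp1_closed_ext[OF YO] rperp1_closed_summands[OF YO]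
      rperp1_covariantly_finite[OF assms(2) assms(6) assms(8) assms(7) YO assms(4)] by blast
qed

end
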